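(* Assume (C1) $a_i-\sum_{k=1}^m b_{j_k,k}\notin\mathbb Z$ for all $1\le i\le p$ and all $(j_1,\dots,j_m)\in\{1,\dots,p\}^m$, and (C2) $b_{j,k}-b_{j',k}\notin\mathbb Z$ for all $1\le j<j'\le p$, $1\le k\le m$. For $J=(j_1,\dots,j_m)\in\{1,\dots,p\}^m$ put $\mu_{J,k}=1-b_{j_k,k}$, $\Sigma_J=\sum_{k=1}^m\mu_{J,k}$, and $$\Phi_J(a,B;x)=\Big(\prod_{k=1}^m x_k^{\mu_{J,k}}\Big)F_C^{p,m}\big(a+\Sigma_J\mathbf 1_p,\ \eta_{j_1}(b_1),\dots,\eta_{j_m}(b_m);x\big).$$ Then on a small simply connected open subset of $\mathbb D\cap\{x_1\cdots x_m\neq0\}$ (with branches of the powers fixed), the $p^m$ functions $\Phi_J(a,B;x)$, $J\in\{1,\dots,p\}^m$, are linearly independent solutions of the system $\mathcal F_C^{p,m}(a,B)$.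
   Context: $F_C^{p,m}(a,B;x)=\sum_{n\in\mathbb N^m}\frac{\prod_{i=1}^p(a_i,n_1+\cdots+n_m)}{\prod_{k=1}^m\{(b_{1,k},n_k)\cdots(b_{p-1,k},n_k)n_k!\}}x^n$, $(\alpha,n)=\Gamma(\alpha+n)/\Gamma(\alpha)$, where $a={}^t(a_1,\dots,a_p)$, $B=(b_1,\dots,b_m)$ with columns $b_k={}^t(b_{1,k},\dots,b_{p-1,k},b_{p,k})$, $b_{p,k}=1$. $\mathbb D=\{x\in\mathbb C^m\mid\sum_k|x_k|^{1/p}<1\}$. $\mathbf 1_p={}^t(1,\dots,1)\in\mathbb Z^p$, $e_j$ the $j$-th unit column vector of length $p$, and $\eta_j(b_k)=b_k+(1-b_{j,k})(\mathbf 1_p+e_j-e_p)$ (so $\eta_p$ is the identity and the last entry of $\eta_j(b_k)$ is always $1$). The system $\mathcal F_C^{p,m}(a,B)$ consists of the $m$ equations $\theta_k(b_{1,k}-1+\theta_k)\cdots(b_{p-1,k}-1+\theta_k)f=x_k(a_1+\theta_1+\cdots+\theta_m)\cdots(a_p+\theta_1+\cdots+\theta_m)f$, $k=1,\dots,m$, with $\theta_k=x_k\partial/\partial x_k$. *)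

theory Defs
  imports "HOL-Analysis.Analysis"
begin

text \<open>Points of C^m are vectors of type complex^'m, where m = CARD('m).
  Row indices j of the parameter matrix B range over {1..p}; b j k is b_{j,k}.\<close>

definition FC :: "nat \<Rightarrow> (nat \<Rightarrow> complex) \<Rightarrow> (nat \<Rightarrow> 'm::finite \<Rightarrow> complex)
                   \<Rightarrow> complex^'m \<Rightarrow> complex" where
  "FC p a b x = (\<Sum>\<^sub>\<infinity> n :: 'm \<Rightarrow> nat.
      (\<Prod>i\<in>{1..p}. pochhammer (a i) (\<Sum>k\<in>UNIV. n k))
      / (\<Prod>k\<in>UNIV. (\<Prod>j\<in>{1..<p}. pochhammer (b j k) (n k)) * fact (n k))
      * (\<Prod>k\<in>UNIV. (x $ k) ^ n k))"

definition domD :: "nat \<Rightarrow> (complex^'m::finite) set" where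
  "domD p = {x. (\<Sum>k\<in>UNIV. norm (x $ k) powr (1 / real p)) < 1}"

definition eta :: "nat \<Rightarrow> nat \<Rightarrow> (nat \<Rightarrow> complex) \<Rightarrow> nat \<Rightarrow> complex" where
  "eta p j bk i = bk i + (1 - bk j) *
      (1 + (if i = j then 1 else 0) - (if i = p then 1 else 0))"

definition upd :: "complex^'m::finite \<Rightarrow> 'm \<Rightarrow> complex \<Rightarrow> complex^'m" where
  "upd x k z = (\<chi> i. if i = k then z else x $ i)"

definition theta :: "'m::finite \<Rightarrow> (complex^'m \<Rightarrow> complex) \<Rightarrow> complex^'m \<Rightarrow> complex" where
  "theta k f x = x $ k * deriv (\<lambda>z. f (upd x k z)) (x $ k)"

definition shift_theta :: "'m::finite \<Rightarrow> complex \<Rightarrow> (complex^'m \<Rightarrow> complex) \<Rightarrow> complex^'m \<Rightarrow> complex" where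
  "shift_theta k c f x = c * f x + theta k f x"

definition shift_total :: "complex \<Rightarrow> (complex^'m::finite \<Rightarrow> complex) \<Rightarrow> complex^'m \<Rightarrow> complex" where
  "shift_total c f x = c * f x + (\<Sum>k\<in>UNIV. theta k f x)"

definition FC_lhs :: "nat \<Rightarrow> (nat \<Rightarrow> 'm::finite \<Rightarrow> complex) \<Rightarrow> 'm
                      \<Rightarrow> (complex^'m \<Rightarrow> complex) \<Rightarrow> complex^'m \<Rightarrow> complex" where
  "FC_lhs p b k f = theta k (foldr (\<lambda>j g. shift_theta k (b j k - 1) g) [1..<p] f)"

definition FC_rhs :: "nat \<Rightarrow> (nat \<Rightarrow> complex) \<Rightarrow> 'm::finite
                      \<Rightarrow> (complex^'m \<Rightarrow> complex) \<Rightarrow> complex^'m \<Rightarrow> complex" where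
  "FC_rhs p a k f x = x $ k * foldr (\<lambda>i g. shift_total (a i) g) [1..<p+1] f x"

definition solves_FC :: "nat \<Rightarrow> (nat \<Rightarrow> complex) \<Rightarrow> (nat \<Rightarrow> 'm::finite \<Rightarrow> complex)
                         \<Rightarrow> (complex^'m) set \<Rightarrow> (complex^'m \<Rightarrow> complex) \<Rightarrow> bool" where
  "solves_FC p a b U f \<longleftrightarrow> (\<forall>k. \<forall>x\<in>U. FC_lhs p b k f x = FC_rhs p a k f x)"

text \<open>Holomorphy in several variables (Osgood): continuous and holomorphic in each variable.\<close>
definition holo_several :: "(complex^'m::finite) set \<Rightarrow> (complex^'m \<Rightarrow> complex) \<Rightarrow> bool" where
  "holo_several U f \<longleftrightarrow> continuous_on U f \<and>
     (\<forall>x\<in>U. \<forall>k. (\<lambda>z. f (upd x k z)) field_differentiable (at (x $ k)))"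

text \<open>Phi_J, with the powers x_k^mu given by exp(mu * L_k x) for fixed log branches L_k.\<close>
definition PhiJ :: "nat \<Rightarrow> (nat \<Rightarrow> complex) \<Rightarrow> (nat \<Rightarrow> 'm::finite \<Rightarrow> complex)
                    \<Rightarrow> ('m \<Rightarrow> complex^'m \<Rightarrow> complex) \<Rightarrow> ('m \<Rightarrow> nat) \<Rightarrow> complex^'m \<Rightarrow> complex" where
  "PhiJ p a b L J x =
     (let \<mu> = (\<lambda>k. 1 - b (J k) k); \<Sigma> = (\<Sum>k\<in>UNIV. \<mu> k) in
      (\<Prod>k\<in>UNIV. exp (\<mu> k * L k x)) *
      FC p (\<lambda>i. a i + \<Sigma>) (\<lambda>i k. eta p (J k) (\<lambda>j. b j k) i) x)"

end

theory Submission
  imports Defs "HOL-Complex_Analysis.Complex_Analysis"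
begin

text \<open>Each \<open>\<Phi>\<^sub>J\<close> is \<open>x\<^sup>\<mu> \<Sum>\<^sub>n c\<^sub>n x\<^sup>n\<close> with coefficients that stay absolutely summable on \<open>\<bbbD>\<close> after
  multiplication by any polynomial in \<open>n\<close> (a multinomial estimate and subexponential growth of the
  Pochhammer quotients). Hence the Euler operators act termwise, \<open>\<theta>\<^sub>k\<close> multiplying \<open>c\<^sub>n\<close> by \<open>\<mu>\<^sub>k + n\<^sub>k\<close>,
  both sides of the \<open>k\<close>-th equation become series of the same shape, and comparing coefficients
  leaves the recurrence of the \<open>F\<^sub>C\<close>-coefficients with lower parameters \<open>\<eta>\<^sub>j\<^sub>k(b\<^sub>k)\<close>.

  For independence write \<open>x\<^sub>k = e\<^sup>s\<^sup>\<^sub>k x\<^sub>0\<^sub>k\<close>. A vanishing combination \<open>\<Sum>\<^sub>J w\<^sub>J \<Phi>\<^sub>J\<close> continues analytically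
  to a product of half-planes \<open>Re s\<^sub>k < \<delta>\<close>, where \<open>s \<mapsto> s + 2\<pi>i n\<close> multiplies the \<open>J\<close>-th term by the
  character \<open>\<Prod>\<^sub>k e\<^sup>2\<^sup>\<pi>\<^sup>i\<^sup>\<mu>\<^sup>\<^sub>J\<^sub>,\<^sub>k\<^sup>n\<^sup>\<^sub>k\<close> of \<open>\<nat>\<^sup>m\<close>. By (C2) these characters are distinct, so every term
  vanishes by itself, whereas each series tends to its leading coefficient \<open>1\<close> at the origin.\<close>

section \<open>Multiple power series on the domain \<open>domD p\<close>\<close>

definition mpow :: "complex^'m::finite \<Rightarrow> ('m \<Rightarrow> nat) \<Rightarrow> complex" where
  "mpow x n = (\<Prod>k\<in>UNIV. (x$k) ^ n k)"

definition mpow_real :: "('m::finite \<Rightarrow> real) \<Rightarrow> ('m \<Rightarrow> nat) \<Rightarrow> real" where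
  "mpow_real r n = (\<Prod>k\<in>UNIV. r k ^ n k)"

definition mdeg :: "('m::finite \<Rightarrow> nat) \<Rightarrow> nat" where
  "mdeg n = (\<Sum>k\<in>UNIV. n k)"

definition norms :: "complex^'m::finite \<Rightarrow> 'm \<Rightarrow> real" where
  "norms x = (\<lambda>k. norm (x$k))"

definition radii_dom :: "nat \<Rightarrow> ('m::finite \<Rightarrow> real) set" where
  "radii_dom p = {r. (\<forall>k. 0 \<le> r k) \<and> (\<Sum>k\<in>UNIV. r k powr (1 / real p)) < 1}"

text \<open>The polynomial weights make this class stable under the Euler operators \<open>\<theta>\<^sub>k\<close>, which act on
  coefficients as multiplication by \<open>n\<^sub>k\<close>.\<close>
definition rapid :: "nat \<Rightarrow> (('m::finite \<Rightarrow> nat) \<Rightarrow> complex) \<Rightarrow> bool" where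
  "rapid p c \<longleftrightarrow> (\<forall>r\<in>radii_dom p. \<forall>d::nat.
      (\<lambda>n. (real (mdeg n) + 1) ^ d * (norm (c n) * mpow_real r n)) summable_on UNIV)"

definition mseries :: "(('m::finite \<Rightarrow> nat) \<Rightarrow> complex) \<Rightarrow> complex^'m \<Rightarrow> complex" where
  "mseries c x = (\<Sum>\<^sub>\<infinity>n. c n * mpow x n)"

lemma in_domD_iff: "x \<in> domD p \<longleftrightarrow> norms x \<in> radii_dom p"
  by (simp add: domD_def radii_dom_def norms_def)

lemma zero_in_domD: "p \<ge> 1 \<Longrightarrow> (0::complex^'m::finite) \<in> domD p"
  by (simp add: domD_def)

lemma norm_mpow: "norm (mpow x n) = mpow_real (norms x) n"
  by (simp add: mpow_def mpow_real_def norms_def norm_power flip: prod_norm)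

lemma mpow_real_nonneg: "(\<And>k. 0 \<le> r k) \<Longrightarrow> 0 \<le> mpow_real r n"
  by (simp add: mpow_real_def prod_nonneg)

lemma mpow_real_mono: "(\<And>k. 0 \<le> r k) \<Longrightarrow> (\<And>k. r k \<le> s k) \<Longrightarrow> mpow_real r n \<le> mpow_real s n"
  unfolding mpow_real_def by (intro prod_mono) (auto intro: power_mono)

lemma radii_dom_nonneg: "r \<in> radii_dom p \<Longrightarrow> 0 \<le> r k"
  by (simp add: radii_dom_def)

lemma radii_dom_mono:
  assumes "s \<in> radii_dom p" "\<And>k. 0 \<le> r k" "\<And>k. r k \<le> s k"
  shows "r \<in> radii_dom p"
proof -
  have "(\<Sum>k\<in>UNIV. r k powr (1 / real p)) \<le> (\<Sum>k\<in>UNIV. s k powr (1 / real p))"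
    by (intro sum_mono powr_mono2) (auto simp: assms(2,3))
  with assms(1,2) show ?thesis by (auto simp: radii_dom_def)
qed

lemma radii_dom_enlarge:
  assumes "r \<in> radii_dom p" "p \<ge> 1"
  obtains \<delta> where "\<delta> > 0" "(\<lambda>k. r k + \<delta>) \<in> radii_dom p"
proof -
  have r0: "\<And>k. 0 \<le> r k" and lt: "(\<Sum>k\<in>UNIV. r k powr (1 / real p)) < 1"
    using assms by (auto simp: radii_dom_def)
  have "((\<lambda>\<delta>. \<Sum>k\<in>UNIV. (r k + \<delta>) powr (1 / real p)) \<longlongrightarrow> (\<Sum>k\<in>UNIV. (r k + 0) powr (1 / real p)))
          (at_right 0)"
    using assms(2)
    by (intro tendsto_sum tendsto_powr2 tendsto_intros)
       (auto simp: r0 intro!: eventually_mono[OF eventually_at_right_less[of 0]] add_nonneg_nonneg)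
  with lt have "eventually (\<lambda>\<delta>. (\<Sum>k\<in>UNIV. (r k + \<delta>) powr (1 / real p)) < 1) (at_right 0)"
    by (auto intro: order_tendstoD)
  moreover have "eventually (\<lambda>\<delta>::real. \<delta> > 0) (at_right 0)"
    by (simp add: eventually_at_right_less)
  ultimately have "eventually (\<lambda>\<delta>. \<delta> > 0 \<and> (\<Sum>k\<in>UNIV. (r k + \<delta>) powr (1 / real p)) < 1)
                     (at_right (0::real))"
    by eventually_elim auto
  then obtain \<delta> where "\<delta> > 0" "(\<Sum>k\<in>UNIV. (r k + \<delta>) powr (1 / real p)) < 1"
    using eventually_happens[of _ "at_right (0::real)"] by (auto simp: trivial_limit_at_right_real)
  with r0 that show ?thesis by (auto simp: radii_dom_def intro: add_nonneg_nonneg)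
qed

text \<open>Sums over multi-indices are turned into ordinary series along a fixed enumeration, so that
  the Weierstrass test and termwise differentiation of series apply.\<close>
definition mindex_enum :: "nat \<Rightarrow> ('m::finite \<Rightarrow> nat)" where
  "mindex_enum = from_nat_into UNIV"

lemma bij_mindex_enum: "bij (mindex_enum :: nat \<Rightarrow> ('m::finite \<Rightarrow> nat))"
proof -
  have "inj (\<lambda>i::nat. (\<lambda>k::'m. i))" by (auto simp: inj_def fun_eq_iff)
  hence "infinite (UNIV :: ('m \<Rightarrow> nat) set)"
    using range_inj_infinite by (metis infinite_UNIV_nat infinite_super top_greatest)
  thus ?thesis unfolding mindex_enum_def by (intro bij_betw_from_nat_into) auto
qed

lemma abs_summable_mindex_enum:
  fixes f :: "('m::finite \<Rightarrow> nat) \<Rightarrow> 'b::banach"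
  assumes "(\<lambda>n. norm (f n)) summable_on UNIV"
  shows "summable (\<lambda>i. norm (f (mindex_enum i)))"
    and "infsum f UNIV = (\<Sum>i. f (mindex_enum i))"
proof -
  have "(\<lambda>i. norm (f (mindex_enum i))) summable_on UNIV"
    using summable_on_reindex_bij_betw[OF bij_mindex_enum, of "\<lambda>n. norm (f n)"] assms by simp
  thus "summable (\<lambda>i. norm (f (mindex_enum i)))" by (rule summable_on_imp_summable)
  have "f summable_on UNIV" using assms by (rule abs_summable_summable)
  hence s: "(\<lambda>i. f (mindex_enum i)) summable_on UNIV"
    using summable_on_reindex_bij_betw[OF bij_mindex_enum, of f] by simp
  have "infsum f UNIV = infsum (\<lambda>i. f (mindex_enum i)) UNIV"
    using infsum_reindex_bij_betw[OF bij_mindex_enum, of f] by simp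
  also have "\<dots> = (\<Sum>i. f (mindex_enum i))"
    using has_sum_imp_sums[OF s[unfolded summable_iff_has_sum_infsum]] by (simp add: sums_iff)
  finally show "infsum f UNIV = (\<Sum>i. f (mindex_enum i))" .
qed

lemma summable_mindex_enum_nonneg:
  fixes f :: "('m::finite \<Rightarrow> nat) \<Rightarrow> real"
  assumes "f summable_on UNIV" "\<And>n. f n \<ge> 0"
  shows "summable (\<lambda>i. f (mindex_enum i))"
  using abs_summable_mindex_enum(1)[of f] assms by simp

lemma rapid_summable_majorant:
  "rapid p c \<Longrightarrow> r \<in> radii_dom p \<Longrightarrow> (\<lambda>n. norm (c n) * mpow_real r n) summable_on UNIV"
  unfolding rapid_def by (drule bspec, assumption, drule spec[of _ 0]) simp

lemma rapid_abs_summable: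
  assumes "rapid p c" "x \<in> domD p"
  shows "(\<lambda>n. norm (c n * mpow x n)) summable_on UNIV"
  using rapid_summable_majorant[OF assms(1), of "norms x"] assms(2)
  by (simp add: in_domD_iff norm_mult norm_mpow)

lemma rapid_summable: "rapid p c \<Longrightarrow> x \<in> domD p \<Longrightarrow> (\<lambda>n. c n * mpow x n) summable_on UNIV"
  by (rule abs_summable_summable) (rule rapid_abs_summable)

lemma mseries_mindex_enum:
  "rapid p c \<Longrightarrow> x \<in> domD p \<Longrightarrow> mseries c x = (\<Sum>i. c (mindex_enum i) * mpow x (mindex_enum i))"
  unfolding mseries_def by (rule abs_summable_mindex_enum(2)) (rule rapid_abs_summable)

lemma isCont_mseries:
  assumes c: "rapid p c" and p: "p \<ge> 1" and x0: "x0 \<in> domD p"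
  shows "isCont (mseries c) x0"
proof -
  obtain \<delta> where \<delta>: "\<delta> > 0" "(\<lambda>k. norms x0 k + \<delta>) \<in> radii_dom p"
    using radii_dom_enlarge[OF x0[unfolded in_domD_iff] p] by blast
  define r where "r = (\<lambda>k. norms x0 k + \<delta>)"
  define S where "S = {x::complex^'a. \<forall>k. norm (x$k) \<le> r k}"
  have r0: "\<And>k. 0 \<le> r k" using \<delta> by (auto simp: r_def norms_def)
  have SD: "S \<subseteq> domD p"
    by (auto simp: in_domD_iff S_def r_def norms_def intro!: radii_dom_mono[OF \<delta>(2)])
  have "uniform_limit S (\<lambda>N x. \<Sum>i<N. c (mindex_enum i) * mpow x (mindex_enum i))
          (\<lambda>x. \<Sum>i. c (mindex_enum i) * mpow x (mindex_enum i)) sequentially"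
  proof (rule Weierstrass_m_test[where M="\<lambda>i. norm (c (mindex_enum i)) * mpow_real r (mindex_enum i)"])
    fix i x assume "x \<in> S"
    thus "norm (c (mindex_enum i) * mpow x (mindex_enum i))
            \<le> norm (c (mindex_enum i)) * mpow_real r (mindex_enum i)"
      by (auto simp: norm_mult norm_mpow S_def norms_def intro!: mult_left_mono mpow_real_mono)
  next
    show "summable (\<lambda>i. norm (c (mindex_enum i)) * mpow_real r (mindex_enum i))"
      using \<delta>(2) c r0
      by (intro summable_mindex_enum_nonneg rapid_summable_majorant) (auto simp: r_def mpow_real_nonneg)
  qed
  hence "continuous_on S (\<lambda>x. \<Sum>i. c (mindex_enum i) * mpow x (mindex_enum i))"
    by (rule uniform_limit_theorem[rotated])
       (auto intro!: always_eventually continuous_intros simp: mpow_def)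
  hence cS: "continuous_on S (mseries c)"
    using SD mseries_mindex_enum[OF c] by (metis (no_types, lifting) continuous_on_cong subsetD)
  have "ball x0 \<delta> \<subseteq> S"
  proof
    fix x assume "x \<in> ball x0 \<delta>"
    hence d: "norm (x - x0) < \<delta>" by (simp add: dist_norm norm_minus_commute)
    have "norm (x$k) \<le> r k" for k
      using Finite_Cartesian_Product.norm_nth_le[of "x - x0" k] norm_triangle_sub[of "x$k" "x0$k"] d
      by (simp add: r_def norms_def)
    thus "x \<in> S" by (simp add: S_def)
  qed
  hence "x0 \<in> interior S" using \<delta>(1) by (meson centre_in_ball interior_maximal open_ball subsetD)
  thus ?thesis using cS continuous_on_interior by blast
qed

lemma continuous_on_mseries: "rapid p c \<Longrightarrow> p \<ge> 1 \<Longrightarrow> continuous_on (domD p) (mseries c)"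
  using isCont_mseries by (intro continuous_at_imp_continuous_on) blast

lemma upd_nth: "upd x k z $ l = (if l = k then z else x $ l)"
  by (simp add: upd_def)

lemma upd_same: "upd x k (x$k) = x"
  by (simp add: upd_def vec_eq_iff)

lemma upd_upd: "upd (upd x k a) k b = upd x k b"
  by (simp add: upd_def vec_eq_iff)

lemma continuous_on_upd: "continuous_on A (\<lambda>z. upd x k z)"
  unfolding upd_def
proof (intro continuous_on_vec_lambda)
  show "continuous_on A (\<lambda>z. if i = k then z else x$i)" for i
    by (cases "i = k") auto
qed

lemma prod_UNIV_split: "(\<Prod>l\<in>UNIV. f l) = f k * (\<Prod>l\<in>-{k}. f (l::'m::finite))"
  by (simp add: Compl_eq_Diff_UNIV prod.remove)

lemma mpow_split: "mpow x n = (x$k) ^ n k * (\<Prod>l\<in>-{k}. (x$l) ^ n l)"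
  unfolding mpow_def by (rule prod_UNIV_split)

lemma mpow_upd: "mpow (upd x k z) n = z ^ n k * (\<Prod>l\<in>-{k}. (x$l) ^ n l)"
  unfolding mpow_split[of _ _ k] by (simp add: upd_nth)

lemma mpow_fun_upd: "mpow x (n(k := j)) = (x$k) ^ j * (\<Prod>l\<in>-{k}. (x$l) ^ n l)"
  unfolding mpow_split[of _ _ k] by simp

lemma mpow_real_split: "mpow_real r n = r k ^ n k * (\<Prod>l\<in>-{k}. r l ^ n l)"
  unfolding mpow_real_def by (rule prod_UNIV_split)

lemma le_mdeg: "n k \<le> mdeg n"
  unfolding mdeg_def by (rule member_le_sum) auto

lemma nth_mult_mpow_dec:
  "x$k * mpow x (n(k := n k - 1)) = (if n k = 0 then x$k * mpow x n else mpow x n)"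
  by (cases "n k") (auto simp: mpow_fun_upd mpow_split[of x n k])

text \<open>The termwise \<open>\<partial>/\<partial>x\<^sub>k\<close>-derivatives are dominated uniformly on a disc around \<open>x$k\<close>:
  the factor \<open>n\<^sub>k\<close> is absorbed by the polynomial weight in the definition of \<open>rapid\<close>.\<close>
lemma mseries_line_majorant:
  assumes c: "rapid p c" and p: "p \<ge> 1" and x: "x \<in> domD p"
  obtains \<delta> M where "\<delta> > 0" "M summable_on UNIV" "\<And>n. M n \<ge> 0"
    "\<And>z. z \<in> ball (x$k) \<delta> \<Longrightarrow> upd x k z \<in> domD p"
    "\<And>z n. z \<in> ball (x$k) \<delta> \<Longrightarrow> norm (c n * of_nat (n k) * mpow (upd x k z) (n(k := n k - 1))) \<le> M n"
proof -
  obtain \<delta> where \<delta>: "\<delta> > 0" "(\<lambda>l. norms x l + \<delta>) \<in> radii_dom p"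
    using radii_dom_enlarge[OF x[unfolded in_domD_iff] p] by blast
  define R where "R = norm (x$k) + \<delta>"
  define r where "r = (norms x)(k := R)"
  have R0: "R > 0" using \<delta> norm_ge_zero[of "x$k"] unfolding R_def by linarith
  have r0: "\<And>l. 0 \<le> r l" using R0 by (auto simp: r_def norms_def)
  have r: "r \<in> radii_dom p"
    by (rule radii_dom_mono[OF \<delta>(2) r0]) (use \<delta>(1) in \<open>auto simp: r_def R_def norms_def\<close>)
  have zR: "norm z \<le> R" if "z \<in> ball (x$k) \<delta>" for z
  proof -
    have "norm (z - x$k) < \<delta>" using that by (simp add: dist_norm norm_minus_commute[of z])
    thus ?thesis using norm_triangle_sub[of z "x$k"] by (simp add: R_def)
  qed
  define M where "M = (\<lambda>n. (real (mdeg n) + 1) * (norm (c n) * mpow_real r n) / R)"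
  have "(\<lambda>n. (real (mdeg n) + 1) ^ 1 * (norm (c n) * mpow_real r n) * (1 / R)) summable_on UNIV"
    using c r unfolding rapid_def by (intro summable_on_cmult_left) blast
  hence "M summable_on UNIV" by (simp add: M_def)
  moreover have M0: "M n \<ge> 0" for n
    using R0 by (auto simp: M_def intro!: divide_nonneg_pos mult_nonneg_nonneg mpow_real_nonneg r0)
  moreover have "upd x k z \<in> domD p" if "z \<in> ball (x$k) \<delta>" for z
    unfolding in_domD_iff by (rule radii_dom_mono[OF r]) (use zR[OF that] in \<open>auto simp: norms_def upd_nth r_def\<close>)
  moreover have "norm (c n * of_nat (n k) * mpow (upd x k z) (n(k := n k - 1))) \<le> M n"
    if z: "z \<in> ball (x$k) \<delta>" for z n
  proof (cases "n k = 0")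
    case True thus ?thesis using M0 by simp
  next
    case False
    define Q where "Q = (\<Prod>l\<in>-{k}. norm (x$l) ^ n l)"
    have Q0: "0 \<le> Q" by (simp add: Q_def prod_nonneg)
    have "norm z ^ (n k - 1) \<le> R ^ (n k - 1)"
      using zR[OF z] by (intro power_mono) auto
    also have "\<dots> = R ^ n k / R" using False R0 by (simp add: power_diff)
    finally have zk: "norm z ^ (n k - 1) \<le> R ^ n k / R" .
    have nk: "real (n k) \<le> real (mdeg n) + 1" using le_mdeg[of n k] by linarith
    have rQ: "mpow_real r n = R ^ n k * Q"
      by (subst mpow_real_split[of _ _ k]) (auto simp: r_def norms_def Q_def intro!: prod.cong)
    have "norm (c n * of_nat (n k) * mpow (upd x k z) (n(k := n k - 1)))
        = norm (c n) * real (n k) * (norm z ^ (n k - 1) * Q)"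
      by (simp add: mpow_fun_upd upd_nth norm_mult norm_power Q_def flip: prod_norm)
    also have "\<dots> \<le> norm (c n) * (real (mdeg n) + 1) * (R ^ n k / R * Q)"
      by (intro mult_mono mult_left_mono zk nk Q0) (auto simp: R0 less_imp_le Q0)
    also have "\<dots> = M n"
      using R0 by (simp add: M_def rQ field_simps)
    finally show ?thesis .
  qed
  ultimately show ?thesis by (rule that[OF \<delta>(1)])
qed

lemma mseries_has_field_derivative:
  assumes c: "rapid p c" and p: "p \<ge> 1" and x: "x \<in> domD p"
  shows "(\<lambda>n. norm (c n * of_nat (n k) * mpow x (n(k := n k - 1)))) summable_on UNIV"
    and "((\<lambda>z. mseries c (upd x k z)) has_field_derivative
           (\<Sum>\<^sub>\<infinity>n. c n * of_nat (n k) * mpow x (n(k := n k - 1)))) (at (x$k))"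
proof -
  obtain \<delta> M where \<delta>: "\<delta> > 0" and M: "M summable_on UNIV" "\<And>n. M n \<ge> 0"
    and updD: "\<And>z. z \<in> ball (x$k) \<delta> \<Longrightarrow> upd x k z \<in> domD p"
    and bound: "\<And>z n. z \<in> ball (x$k) \<delta> \<Longrightarrow>
                  norm (c n * of_nat (n k) * mpow (upd x k z) (n(k := n k - 1))) \<le> M n"
    using mseries_line_majorant[OF c p x] by metis
  define S where "S = ball (x$k) \<delta>"
  have xS: "x$k \<in> S" using \<delta> by (simp add: S_def)
  show sx: "(\<lambda>n. norm (c n * of_nat (n k) * mpow x (n(k := n k - 1)))) summable_on UNIV"
    by (rule summable_on_comparison_test[OF M(1)]) (use bound[of "x$k"] \<delta> in \<open>auto simp: upd_same\<close>)
  define f where "f = (\<lambda>i z. c (mindex_enum i) * mpow (upd x k z) (mindex_enum i))"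
  define f' where "f' = (\<lambda>i z. c (mindex_enum i) * of_nat (mindex_enum i k)
                                 * mpow (upd x k z) ((mindex_enum i)(k := mindex_enum i k - 1)))"
  have der: "(f i has_field_derivative f' i z) (at z within S)" for i z
  proof -
    define n :: "'a \<Rightarrow> nat" where "n = mindex_enum i"
    define Q where "Q = (\<Prod>l\<in>-{k}. (x$l) ^ n l)"
    have "((\<lambda>z. c n * (z ^ n k * Q)) has_field_derivative c n * (of_nat (n k) * z ^ (n k - 1) * Q))
            (at z within S)"
      by (auto intro!: derivative_eq_intros)
    thus ?thesis
      by (simp add: f_def f'_def mpow_upd mpow_fun_upd upd_nth n_def[symmetric] Q_def[symmetric] algebra_simps)
  qed
  have "uniformly_convergent_on S (\<lambda>N z. \<Sum>i<N. f' i z)"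
    by (rule Weierstrass_m_test'_ev[where M="\<lambda>i. M (mindex_enum i)"])
       (use bound summable_mindex_enum_nonneg[OF M] in \<open>auto simp: f'_def S_def\<close>)
  moreover have "summable (\<lambda>i. f i (x$k))"
    using abs_summable_mindex_enum(1)[OF rapid_abs_summable[OF c x]]
    by (auto simp: f_def upd_same intro: summable_norm_cancel)
  ultimately have "((\<lambda>z. \<Sum>i. f i z) has_field_derivative (\<Sum>i. f' i (x$k))) (at (x$k))"
    using has_field_derivative_series'(2)[OF _ der _ xS] xS by (auto simp: S_def interior_open)
  moreover have "(\<Sum>i. f' i (x$k)) = (\<Sum>\<^sub>\<infinity>n. c n * of_nat (n k) * mpow x (n(k := n k - 1)))"
    using abs_summable_mindex_enum(2)[OF sx] by (simp add: f'_def upd_same)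
  moreover have "(\<Sum>i. f i z) = mseries c (upd x k z)" if "z \<in> S" for z
    using mseries_mindex_enum[OF c updD] that by (simp add: f_def S_def)
  ultimately show "((\<lambda>z. mseries c (upd x k z)) has_field_derivative
           (\<Sum>\<^sub>\<infinity>n. c n * of_nat (n k) * mpow x (n(k := n k - 1)))) (at (x$k))"
    using has_field_derivative_transform_within_open[of _ _ _ S] xS by (auto simp: S_def)
qed

lemma mseries_field_differentiable:
  "rapid p c \<Longrightarrow> p \<ge> 1 \<Longrightarrow> x \<in> domD p \<Longrightarrow> (\<lambda>z. mseries c (upd x k z)) field_differentiable (at (x$k))"
  using mseries_has_field_derivative(2) field_differentiable_def by blast

lemma theta_mseries:
  assumes c: "rapid p c" and p: "p \<ge> 1" and x: "x \<in> domD p"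
  shows "theta k (mseries c) x = mseries (\<lambda>n. of_nat (n k) * c n) x"
proof -
  have "theta k (mseries c) x = x$k * (\<Sum>\<^sub>\<infinity>n. c n * of_nat (n k) * mpow x (n(k := n k - 1)))"
    unfolding theta_def using mseries_has_field_derivative(2)[OF assms] by (simp add: DERIV_imp_deriv)
  also have "\<dots> = (\<Sum>\<^sub>\<infinity>n. of_nat (n k) * c n * (x$k * mpow x (n(k := n k - 1))))"
    by (simp add: infsum_cmult_right'[symmetric] algebra_simps)
  also have "\<dots> = mseries (\<lambda>n. of_nat (n k) * c n) x"
    unfolding mseries_def
    by (intro infsum_cong) (metis (no_types, lifting) mult_not_zero nth_mult_mpow_dec of_nat_0)
  finally show ?thesis .
qed

section \<open>Growth of the coefficients of \<open>F\<^sub>C\<close>\<close>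

definition subexponential :: "(nat \<Rightarrow> real) \<Rightarrow> bool" where
  "subexponential u \<longleftrightarrow> (\<forall>\<theta>>1. \<exists>C. \<forall>N. u N \<le> C * \<theta> ^ N)"

lemma geometric_bound_of_ratio:
  fixes u :: "nat \<Rightarrow> real"
  assumes u0: "\<And>N. 0 \<le> u N" and \<theta>: "\<theta> > 0" and ratio: "\<And>N. N \<ge> N0 \<Longrightarrow> u (Suc N) \<le> \<theta> * u N"
  shows "\<exists>C. \<forall>N. u N \<le> C * \<theta> ^ N"
proof -
  define C where "C = Max ((\<lambda>N. u N / \<theta> ^ N) ` {..N0})"
  have initial: "u N \<le> C * \<theta> ^ N" if "N \<le> N0" for N
  proof -
    have "u N / \<theta> ^ N \<le> C" unfolding C_def by (rule Max_ge) (use that in auto)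
    thus ?thesis using \<theta> by (simp add: divide_le_eq mult.commute)
  qed
  have "u N \<le> C * \<theta> ^ N" for N
  proof (induction N)
    case 0 thus ?case by (rule initial) simp
  next
    case (Suc N)
    show ?case
    proof (cases "Suc N \<le> N0")
      case True thus ?thesis by (rule initial)
    next
      case False
      hence "u (Suc N) \<le> \<theta> * u N" by (intro ratio) simp
      also have "\<dots> \<le> \<theta> * (C * \<theta> ^ N)" using Suc \<theta> by (intro mult_left_mono) auto
      finally show ?thesis by (simp add: algebra_simps)
    qed
  qed
  thus ?thesis by blast
qed

lemma subexponentialI_ratio:
  assumes "\<And>N. 0 \<le> u N" and "\<And>\<theta>. \<theta> > 1 \<Longrightarrow> \<exists>N0. \<forall>N\<ge>N0. u (Suc N) \<le> \<theta> * u N"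
  shows "subexponential u"
  unfolding subexponential_def
proof (intro allI impI)
  fix \<theta> :: real assume "\<theta> > 1"
  then obtain N0 where "\<forall>N\<ge>N0. u (Suc N) \<le> \<theta> * u N" using assms(2) by blast
  thus "\<exists>C. \<forall>N. u N \<le> C * \<theta> ^ N" using \<open>\<theta> > 1\<close> by (intro geometric_bound_of_ratio[OF assms(1)]) auto
qed

lemma subexponential_mult:
  assumes "subexponential u" "subexponential v" "\<And>N. 0 \<le> u N" "\<And>N. 0 \<le> v N"
  shows "subexponential (\<lambda>N. u N * v N)"
  unfolding subexponential_def
proof (intro allI impI)
  fix \<theta> :: real assume \<theta>: "\<theta> > 1"
  hence "sqrt \<theta> > 1" by simp
  then obtain C1 C2 where C1: "\<And>N. u N \<le> C1 * sqrt \<theta> ^ N" and C2: "\<And>N. v N \<le> C2 * sqrt \<theta> ^ N"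
    using assms(1,2) unfolding subexponential_def by meson
  have "u N * v N \<le> (C1 * C2) * \<theta> ^ N" for N
  proof -
    have "u N * v N \<le> (C1 * sqrt \<theta> ^ N) * (C2 * sqrt \<theta> ^ N)"
      by (intro mult_mono C1 C2 assms(3,4)) (use C1[of N] assms(3)[of N] in linarith)
    also have "\<dots> = (C1 * C2) * (sqrt \<theta> ^ N * sqrt \<theta> ^ N)" by (simp add: algebra_simps)
    also have "sqrt \<theta> ^ N * sqrt \<theta> ^ N = (sqrt \<theta> * sqrt \<theta>) ^ N" by (simp only: power_mult_distrib)
    also have "sqrt \<theta> * sqrt \<theta> = \<theta>" using \<theta> by simp
    finally show ?thesis .
  qed
  thus "\<exists>C. \<forall>N. u N * v N \<le> C * \<theta> ^ N" by blast
qed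

lemma subexponential_prod:
  assumes "finite J" "\<And>j. j \<in> J \<Longrightarrow> subexponential (f j)" "\<And>j N. j \<in> J \<Longrightarrow> 0 \<le> f j N"
  shows "subexponential (\<lambda>N. \<Prod>j\<in>J. f j N)"
  using assms
proof (induction J rule: finite_induct)
  case empty
  show ?case unfolding subexponential_def by (auto intro!: exI[of _ 1])
next
  case (insert j J)
  have "subexponential (\<lambda>N. f j N * (\<Prod>j\<in>J. f j N))"
    using insert by (intro subexponential_mult) (auto intro: prod_nonneg)
  thus ?case using insert by simp
qed

lemma subexponential_linear: "subexponential (\<lambda>N. real N + 1)"
proof (rule subexponentialI_ratio)
  fix \<theta> :: real assume \<theta>: "\<theta> > 1"
  obtain N0 :: nat where N0: "real N0 \<ge> 1 / (\<theta> - 1)" using real_arch_simple by blast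
  have "real (Suc N) + 1 \<le> \<theta> * (real N + 1)" if "N \<ge> N0" for N
  proof -
    have "1 / (\<theta> - 1) \<le> real N" using N0 that by linarith
    hence "1 \<le> real N * (\<theta> - 1)" using \<theta> by (simp add: divide_le_eq mult.commute)
    thus ?thesis using \<theta> by (simp add: algebra_simps)
  qed
  thus "\<exists>N0. \<forall>N\<ge>N0. real (Suc N) + 1 \<le> \<theta> * (real N + 1)" by blast
qed auto

lemma subexponential_power: "subexponential (\<lambda>N. (real N + 1) ^ d)"
  using subexponential_prod[of "{..<d}" "\<lambda>_ N. real N + 1"] subexponential_linear by simp

lemma pochhammer_nonneg_real: "0 \<le> (x::real) \<Longrightarrow> 0 \<le> pochhammer x n"
  unfolding pochhammer_prod by (auto intro!: prod_nonneg)

lemma norm_pochhammer_le: "norm (pochhammer (a::complex) N) \<le> pochhammer (norm a) N"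
  unfolding pochhammer_prod by (auto simp: prod_norm[symmetric] intro!: prod_mono norm_triangle_le)

lemma subexponential_pochhammer_div_fact:
  "subexponential (\<lambda>N. norm (pochhammer (a::complex) N) / fact N)"
proof -
  define A where "A = norm a"
  have "subexponential (\<lambda>N. pochhammer A N / fact N)"
  proof (rule subexponentialI_ratio)
    fix \<theta> :: real assume \<theta>: "\<theta> > 1"
    obtain N0 :: nat where N0: "real N0 \<ge> A / (\<theta> - 1)" using real_arch_simple by blast
    have "pochhammer A (Suc N) / fact (Suc N) \<le> \<theta> * (pochhammer A N / fact N)" if "N \<ge> N0" for N
    proof -
      have "A / (\<theta> - 1) \<le> real N" using N0 that by linarith
      hence "A \<le> real N * (\<theta> - 1)" using \<theta> by (simp add: divide_le_eq mult.commute)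
      hence "(A + real N) / (real N + 1) \<le> \<theta>" using \<theta> by (simp add: divide_le_eq algebra_simps)
      moreover have "0 \<le> pochhammer A N / fact N" by (simp add: A_def pochhammer_nonneg_real)
      ultimately have "(pochhammer A N / fact N) * ((A + real N) / (real N + 1)) \<le> (pochhammer A N / fact N) * \<theta>"
        by (rule mult_left_mono)
      moreover have "pochhammer A (Suc N) / fact (Suc N) = (pochhammer A N / fact N) * ((A + real N) / (real N + 1))"
        by (simp add: pochhammer_Suc field_simps)
      ultimately show ?thesis by (simp add: mult.commute)
    qed
    thus "\<exists>N0. \<forall>N\<ge>N0. pochhammer A (Suc N) / fact (Suc N) \<le> \<theta> * (pochhammer A N / fact N)" by blast
  qed (simp add: A_def pochhammer_nonneg_real)
  thus ?thesis unfolding subexponential_def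
    by (smt (verit, best) A_def divide_right_mono fact_ge_zero norm_pochhammer_le)
qed

lemma subexponential_fact_div_pochhammer:
  assumes nz: "\<And>n. pochhammer (b::complex) n \<noteq> 0"
  shows "subexponential (\<lambda>N. fact N / norm (pochhammer b N))"
proof (rule subexponentialI_ratio)
  fix \<theta> :: real assume \<theta>: "\<theta> > 1"
  obtain N0 :: nat where N0: "real N0 \<ge> (\<theta> * norm b + 1) / (\<theta> - 1)" using real_arch_simple by blast
  have "fact (Suc N) / norm (pochhammer b (Suc N)) \<le> \<theta> * (fact N / norm (pochhammer b N))"
    if "N \<ge> N0" for N
  proof -
    have "(\<theta> * norm b + 1) / (\<theta> - 1) \<le> real N" using N0 that by linarith
    hence "real N + 1 \<le> \<theta> * (real N - norm b)" using \<theta> by (simp add: divide_le_eq algebra_simps)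
    moreover have "real N - norm b \<le> norm (b + of_nat N)"
      using norm_triangle_ineq2[of "of_nat N" "-b"] by (simp add: add.commute)
    ultimately have le: "real N + 1 \<le> \<theta> * norm (b + of_nat N)"
      using \<theta> by (smt (verit, best) mult_left_mono)
    have pos: "norm (b + of_nat N) > 0" using nz[of "Suc N"] by (auto simp: pochhammer_Suc)
    have pN: "norm (pochhammer b N) > 0" using nz[of N] by simp
    have "fact (Suc N) / norm (pochhammer b (Suc N))
        = (fact N / norm (pochhammer b N)) * ((real N + 1) / norm (b + of_nat N))"
      unfolding pochhammer_Suc norm_mult using pos pN by (simp add: field_simps)
    also have "\<dots> \<le> (fact N / norm (pochhammer b N)) * \<theta>"
      using le pos pN by (intro mult_left_mono) (auto simp: divide_le_eq mult.commute)
    finally show ?thesis by (simp add: mult.commute)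
  qed
  thus "\<exists>N0. \<forall>N\<ge>N0. fact (Suc N) / norm (pochhammer b (Suc N)) \<le> \<theta> * (fact N / norm (pochhammer b N))"
    by blast
qed auto

lemma binomial_term_le_power:
  fixes x y :: real
  assumes "0 \<le> x" "0 \<le> y"
  shows "real (m choose j) * x ^ j * y ^ (m - j) \<le> (x + y) ^ m"
proof (cases "j \<le> m")
  case True
  have "real (m choose j) * x ^ j * y ^ (m - j) \<le> (\<Sum>i\<le>m. real (m choose i) * x ^ i * y ^ (m - i))"
    by (rule member_le_sum[of j "{..m}" "\<lambda>i. real (m choose i) * x ^ i * y ^ (m - i)"])
       (use True assms in auto)
  also have "\<dots> = (x + y) ^ m" by (rule binomial_ring[symmetric])
  finally show ?thesis .
next
  case False thus ?thesis using assms by (simp add: binomial_eq_0)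
qed

lemma multinomial_term_le_power:
  fixes y :: "'k \<Rightarrow> real" and n :: "'k \<Rightarrow> nat"
  assumes "finite K" "\<And>k. k \<in> K \<Longrightarrow> 0 \<le> y k"
  shows "fact (\<Sum>k\<in>K. n k) * (\<Prod>k\<in>K. y k ^ n k) \<le> (\<Sum>k\<in>K. y k) ^ (\<Sum>k\<in>K. n k) * (\<Prod>k\<in>K. fact (n k))"
  using assms
proof (induction K rule: finite_induct)
  case empty thus ?case by simp
next
  case (insert k K)
  define A where "A = (\<Sum>k\<in>K. n k)"
  define S where "S = (\<Sum>k\<in>K. y k)"
  define P where "P = (\<Prod>k\<in>K. y k ^ n k)"
  define F where "F = (\<Prod>k\<in>K. fact (n k) :: real)"
  define a where "a = n k"
  have y0: "0 \<le> y k" using insert by auto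
  have S0: "0 \<le> S" unfolding S_def using insert by (auto intro: sum_nonneg)
  have IH: "fact A * P \<le> S ^ A * F" using insert by (simp add: A_def P_def S_def F_def)
  have "real (fact a * fact A * ((a + A) choose a)) = real (fact (a + A))"
    using binomial_fact_lemma[of a "a + A"] by simp
  hence "fact (a + A) = real ((a + A) choose a) * fact a * fact A"
    by (simp add: algebra_simps)
  hence "fact (a + A) * (y k ^ a * P) = real ((a + A) choose a) * fact a * y k ^ a * (fact A * P)"
    by (simp add: algebra_simps)
  also have "\<dots> \<le> real ((a + A) choose a) * fact a * y k ^ a * (S ^ A * F)"
    by (intro mult_left_mono IH) (auto simp: y0)
  also have "\<dots> = (real ((a + A) choose a) * y k ^ a * S ^ ((a + A) - a)) * (fact a * F)"
    by (simp add: algebra_simps)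
  also have "\<dots> \<le> (y k + S) ^ (a + A) * (fact a * F)"
    by (intro mult_right_mono binomial_term_le_power) (auto simp: y0 S0 F_def intro!: mult_nonneg_nonneg prod_nonneg)
  finally show ?case using insert by (simp add: A_def P_def S_def F_def a_def algebra_simps)
qed

lemma summable_on_power_mdeg:
  assumes "0 \<le> \<rho>" "\<rho> < (1::real)"
  shows "(\<lambda>n::'m::finite \<Rightarrow> nat. \<rho> ^ mdeg n) summable_on UNIV"
proof -
  have geom: "(\<lambda>j::nat. norm (\<rho> ^ j)) summable_on UNIV"
    using assms by (subst summable_on_UNIV_nonneg_real_iff) (auto simp: summable_geometric)
  have "Infinite_Set_Sum.abs_summable_on (\<lambda>g::'m \<Rightarrow> nat. \<Prod>x\<in>UNIV. \<rho> ^ g x) (PiE UNIV (\<lambda>_. UNIV))"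
    by (intro abs_summable_on_prod_PiE) (use abs_summable_equivalent[THEN iffD1, OF geom] in auto)
  hence "(\<lambda>g::'m \<Rightarrow> nat. norm (\<Prod>x\<in>UNIV. \<rho> ^ g x)) summable_on PiE UNIV (\<lambda>_. UNIV)"
    by (rule abs_summable_equivalent[THEN iffD2])
  hence "(\<lambda>g::'m \<Rightarrow> nat. norm (\<Prod>x\<in>UNIV. \<rho> ^ g x)) summable_on UNIV"
    by (simp add: PiE_UNIV_domain)
  moreover have "norm (\<Prod>x\<in>UNIV. \<rho> ^ g x) = \<rho> ^ mdeg g" for g :: "'m \<Rightarrow> nat"
    using assms by (simp add: mdeg_def power_sum abs_prod)
  ultimately show ?thesis by simp
qed

definition FC_coeff :: "nat \<Rightarrow> (nat \<Rightarrow> complex) \<Rightarrow> (nat \<Rightarrow> 'm::finite \<Rightarrow> complex) \<Rightarrow> ('m \<Rightarrow> nat) \<Rightarrow> complex"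
  where "FC_coeff p a b n = (\<Prod>i\<in>{1..p}. pochhammer (a i) (mdeg n)) /
           (\<Prod>k\<in>UNIV. (\<Prod>j\<in>{1..<p}. pochhammer (b j k) (n k)) * fact (n k))"

lemma FC_eq_mseries: "FC p a b = mseries (FC_coeff p a b)"
  by (auto simp: FC_def mseries_def FC_coeff_def mpow_def mdeg_def fun_eq_iff)

lemma FC_coeff_zero: "FC_coeff p a b (\<lambda>_. 0) = 1"
  by (simp add: FC_coeff_def mdeg_def)

text \<open>With \<open>r\<^sub>k = y\<^sub>k\<^sup>p\<close>, the multinomial inequality bounds \<open>N! y\<^sup>n / \<Prod>\<^sub>k n\<^sub>k!\<close> by \<open>(\<Sum>\<^sub>k y\<^sub>k)\<^sup>N\<close>; what is
  left of the weighted coefficient splits into a factor depending on \<open>N = mdeg n\<close> and one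
  factor for each \<open>n\<^sub>k\<close>, both growing subexponentially.\<close>
lemma FC_coeff_weighted_le:
  fixes b :: "nat \<Rightarrow> 'm::finite \<Rightarrow> complex" and y :: "'m \<Rightarrow> real"
  assumes p: "p \<ge> 1" and nz: "\<And>j k m. j \<in> {1..<p} \<Longrightarrow> pochhammer (b j k) m \<noteq> 0"
    and y0: "\<And>k. 0 \<le> y k"
    and C1: "\<And>N. (real N + 1) ^ d * (\<Prod>i\<in>{1..p}. norm (pochhammer (a i) N) / fact N) \<le> C1 * \<theta> ^ N"
    and C2: "\<And>k m. (\<Prod>j\<in>{1..<p}. fact m / norm (pochhammer (b j k) m)) \<le> C2 k * \<theta> ^ m"
  shows "(real (mdeg n) + 1) ^ d * (norm (FC_coeff p a b n) * mpow_real (\<lambda>k. y k ^ p) n)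
           \<le> C1 * (\<Prod>k\<in>UNIV. C2 k) * (\<theta>\<^sup>2 * (\<Sum>k\<in>UNIV. y k) ^ p) ^ mdeg n"
proof -
  define N where "N = mdeg n"
  define \<sigma> where "\<sigma> = (\<Sum>k\<in>UNIV. y k)"
  define U where "U = (real N + 1) ^ d * (\<Prod>i\<in>{1..p}. norm (pochhammer (a i) N) / fact N)"
  define V where "V k = (\<Prod>j\<in>{1..<p}. fact (n k) / norm (pochhammer (b j k) (n k)))" for k
  define PA where "PA = (\<Prod>i\<in>{1..p}. norm (pochhammer (a i) N))"
  define PB where "PB = (\<Prod>k\<in>UNIV. \<Prod>j\<in>{1..<p}. norm (pochhammer (b j k) (n k)))"
  define FK where "FK = (\<Prod>k\<in>UNIV. fact (n k) :: real)"
  define F where "F = (fact N :: real)"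
  define Y where "Y = (\<Prod>k\<in>UNIV. y k ^ n k)"
  have PB0: "PB > 0" unfolding PB_def using nz by (auto intro!: prod_pos)
  have FK0: "FK > 0" unfolding FK_def by (auto intro!: prod_pos)
  have F0: "F > 0" by (simp add: F_def)
  have Y0: "Y \<ge> 0" unfolding Y_def using y0 by (auto intro!: prod_nonneg)
  have U0: "0 \<le> U" unfolding U_def by (intro mult_nonneg_nonneg prod_nonneg) auto
  have V0: "0 \<le> (\<Prod>k\<in>UNIV. V k)" unfolding V_def by (auto intro!: prod_nonneg)
  have "(real N + 1) ^ d * (norm (FC_coeff p a b n) * mpow_real (\<lambda>k. y k ^ p) n)
      = (real N + 1) ^ d * (PA / (PB * FK)) * Y ^ p"
  proof -
    have "(y k ^ p) ^ n k = (y k ^ n k) ^ p" for k by (simp add: mult.commute flip: power_mult)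
    hence "mpow_real (\<lambda>k. y k ^ p) n = Y ^ p" by (simp add: mpow_real_def Y_def prod_power_distrib)
    thus ?thesis
      by (simp add: FC_coeff_def PA_def PB_def FK_def N_def norm_divide norm_mult prod.distrib
            flip: prod_norm)
  qed
  also have "\<dots> = U * (\<Prod>k\<in>UNIV. V k) * (F * Y / FK) ^ p"
  proof -
    have "FK ^ p = FK ^ (p - 1) * FK" using p by (simp add: power_eq_if)
    moreover have "(\<Prod>k\<in>UNIV. V k) = FK ^ (p - 1) / PB"
      by (simp add: V_def PB_def FK_def prod_dividef prod_power_distrib)
    ultimately show ?thesis
      using PB0 FK0 F0 by (simp add: U_def PA_def F_def prod_dividef power_divide power_mult_distrib
                               field_simps)
  qed
  also have "\<dots> \<le> (C1 * \<theta> ^ N) * ((\<Prod>k\<in>UNIV. C2 k) * \<theta> ^ N) * (\<sigma> ^ N) ^ p"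
  proof (rule mult_mono)
    have "V k \<le> C2 k * \<theta> ^ n k" for k unfolding V_def by (rule C2)
    hence "(\<Prod>k\<in>UNIV. V k) \<le> (\<Prod>k\<in>UNIV. C2 k * \<theta> ^ n k)"
      by (intro prod_mono) (auto simp: V_def prod_nonneg)
    also have "\<dots> = (\<Prod>k\<in>UNIV. C2 k) * \<theta> ^ N"
      by (simp add: prod.distrib N_def mdeg_def power_sum)
    finally have W: "(\<Prod>k\<in>UNIV. V k) \<le> (\<Prod>k\<in>UNIV. C2 k) * \<theta> ^ N" .
    have UC: "U \<le> C1 * \<theta> ^ N" unfolding U_def by (rule C1)
    show "U * (\<Prod>k\<in>UNIV. V k) \<le> (C1 * \<theta> ^ N) * ((\<Prod>k\<in>UNIV. C2 k) * \<theta> ^ N)"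
      using U0 V0 UC by (intro mult_mono[OF UC W]) auto
    have "F * Y \<le> \<sigma> ^ N * FK"
      using multinomial_term_le_power[of UNIV y n] y0
      by (simp add: F_def Y_def \<sigma>_def FK_def N_def mdeg_def)
    hence "F * Y / FK \<le> \<sigma> ^ N" using FK0 by (simp add: divide_le_eq)
    thus "(F * Y / FK) ^ p \<le> (\<sigma> ^ N) ^ p" by (rule power_mono) (use F0 Y0 FK0 in simp)
    show "0 \<le> (F * Y / FK) ^ p" using F0 Y0 FK0 by simp
    show "0 \<le> (C1 * \<theta> ^ N) * ((\<Prod>k\<in>UNIV. C2 k) * \<theta> ^ N)"
      using U0 V0 UC W by (intro mult_nonneg_nonneg[of "C1 * \<theta> ^ N"]) linarith+
  qed
  also have "\<dots> = C1 * (\<Prod>k\<in>UNIV. C2 k) * (\<theta>\<^sup>2 * \<sigma> ^ p) ^ N"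
    by (simp add: power_mult_distrib power2_eq_square algebra_simps flip: power_mult)
  finally show ?thesis by (simp add: N_def \<sigma>_def)
qed

lemma powr_inverse_power: "0 \<le> (r::real) \<Longrightarrow> p \<ge> 1 \<Longrightarrow> (r powr (1 / real p)) ^ p = r"
  by (cases "r = 0") (auto simp: powr_realpow[symmetric] powr_powr)

lemma rapid_FC_coeff:
  fixes b :: "nat \<Rightarrow> 'm::finite \<Rightarrow> complex"
  assumes p: "p \<ge> 1" and nz: "\<And>j k m. j \<in> {1..<p} \<Longrightarrow> pochhammer (b j k) m \<noteq> 0"
  shows "rapid p (FC_coeff p a b)"
  unfolding rapid_def
proof (intro ballI allI)
  fix r :: "'m \<Rightarrow> real" and d :: nat
  assume r: "r \<in> radii_dom p"
  define y where "y k = r k powr (1 / real p)" for k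
  define q where "q = (\<Sum>k\<in>UNIV. y k) ^ p"
  have q0: "0 \<le> q" by (simp add: q_def y_def sum_nonneg)
  have "(\<Sum>k\<in>UNIV. y k) < 1" using r by (simp add: radii_dom_def y_def)
  hence q1: "q < 1"
    using p power_strict_mono[of "\<Sum>k\<in>UNIV. y k" 1 p] by (simp add: q_def y_def sum_nonneg)
  define \<theta> where "\<theta> = sqrt (2 / (1 + q))"
  have \<theta>: "\<theta> > 1" "\<theta>\<^sup>2 = 2 / (1 + q)" using q0 q1 by (simp_all add: \<theta>_def)
  have \<rho>: "0 \<le> \<theta>\<^sup>2 * q" "\<theta>\<^sup>2 * q < 1" using q0 q1 by (simp_all add: \<theta>(2) divide_less_eq)
  have "subexponential (\<lambda>N. (real N + 1) ^ d * (\<Prod>i\<in>{1..p}. norm (pochhammer (a i) N) / fact N))"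
    by (intro subexponential_mult subexponential_power subexponential_prod)
       (auto intro!: prod_nonneg subexponential_pochhammer_div_fact)
  then obtain C1 where C1: "\<And>N. (real N + 1) ^ d * (\<Prod>i\<in>{1..p}. norm (pochhammer (a i) N) / fact N) \<le> C1 * \<theta> ^ N"
    using \<theta>(1) unfolding subexponential_def by blast
  have "subexponential (\<lambda>m. \<Prod>j\<in>{1..<p}. fact m / norm (pochhammer (b j k) m))" for k
    by (intro subexponential_prod) (auto intro!: subexponential_fact_div_pochhammer nz)
  hence "\<forall>k. \<exists>C. \<forall>m. (\<Prod>j\<in>{1..<p}. fact m / norm (pochhammer (b j k) m)) \<le> C * \<theta> ^ m"
    using \<theta>(1) unfolding subexponential_def by blast
  then obtain C2 where C2: "\<And>k m. (\<Prod>j\<in>{1..<p}. fact m / norm (pochhammer (b j k) m)) \<le> C2 k * \<theta> ^ m"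
    by metis
  have "(\<lambda>n. C1 * (\<Prod>k\<in>UNIV. C2 k) * (\<theta>\<^sup>2 * q) ^ mdeg n) summable_on UNIV"
    by (intro summable_on_cmult_right summable_on_power_mdeg \<rho>)
  moreover have "(real (mdeg n) + 1) ^ d * (norm (FC_coeff p a b n) * mpow_real r n)
                   \<le> C1 * (\<Prod>k\<in>UNIV. C2 k) * (\<theta>\<^sup>2 * q) ^ mdeg n" for n
  proof -
    have "r = (\<lambda>k. y k ^ p)"
      using r p by (auto simp: y_def powr_inverse_power radii_dom_nonneg)
    thus ?thesis
      unfolding q_def by (simp only:) (rule FC_coeff_weighted_le; use p nz C1 C2 in \<open>simp add: y_def\<close>)
  qed
  ultimately show "(\<lambda>n. (real (mdeg n) + 1) ^ d * (norm (FC_coeff p a b n) * mpow_real r n)) summable_on UNIV"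
    by (rule summable_on_comparison_test) (auto intro!: mult_nonneg_nonneg mpow_real_nonneg radii_dom_nonneg[OF r])
qed

section \<open>Operations on rapidly convergent series\<close>

definition poly_bounded :: "(('m::finite \<Rightarrow> nat) \<Rightarrow> complex) \<Rightarrow> bool" where
  "poly_bounded f \<longleftrightarrow> (\<exists>C\<ge>0. \<exists>e. \<forall>n. norm (f n) \<le> C * (real (mdeg n) + 1) ^ e)"

lemma poly_boundedI: "C \<ge> 0 \<Longrightarrow> (\<And>n. norm (f n) \<le> C * (real (mdeg n) + 1) ^ e) \<Longrightarrow> poly_bounded f"
  unfolding poly_bounded_def by blast

lemma poly_bounded_const: "poly_bounded (\<lambda>n. c)"
  by (rule poly_boundedI[of "norm c" _ 0]) auto

lemma poly_bounded_nth: "poly_bounded (\<lambda>n. of_nat (n k))"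
proof (rule poly_boundedI[of 1 _ 1])
  show "norm (of_nat (n k) :: complex) \<le> 1 * (real (mdeg n) + 1) ^ 1" for n
    using le_mdeg[of n k] by simp
qed simp

lemma poly_bounded_mdeg: "poly_bounded (\<lambda>n. of_nat (mdeg n))"
  by (rule poly_boundedI[of 1 _ 1]) auto

lemma poly_bounded_add:
  assumes "poly_bounded f" "poly_bounded g"
  shows "poly_bounded (\<lambda>n. f n + g n)"
proof -
  obtain C1 e1 where C1: "C1 \<ge> 0" "\<And>n. norm (f n) \<le> C1 * (real (mdeg n) + 1) ^ e1"
    using assms(1) poly_bounded_def by blast
  obtain C2 e2 where C2: "C2 \<ge> 0" "\<And>n. norm (g n) \<le> C2 * (real (mdeg n) + 1) ^ e2"
    using assms(2) poly_bounded_def by blast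
  have "norm (f n + g n) \<le> (C1 + C2) * (real (mdeg n) + 1) ^ (e1 + e2)" for n
  proof -
    have "norm (f n + g n) \<le> C1 * (real (mdeg n) + 1) ^ e1 + C2 * (real (mdeg n) + 1) ^ e2"
      using C1 C2 norm_triangle_ineq[of "f n" "g n"] by (smt (verit))
    also have "\<dots> \<le> C1 * (real (mdeg n) + 1) ^ (e1 + e2) + C2 * (real (mdeg n) + 1) ^ (e1 + e2)"
      using C1 C2 by (intro add_mono mult_left_mono power_increasing) auto
    finally show ?thesis by (simp add: algebra_simps)
  qed
  thus ?thesis using C1 C2 by (intro poly_boundedI[of "C1 + C2"]) auto
qed

lemma poly_bounded_mult:
  assumes "poly_bounded f" "poly_bounded g"
  shows "poly_bounded (\<lambda>n. f n * g n)"
proof -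
  obtain C1 e1 where C1: "C1 \<ge> 0" "\<And>n. norm (f n) \<le> C1 * (real (mdeg n) + 1) ^ e1"
    using assms(1) poly_bounded_def by blast
  obtain C2 e2 where C2: "C2 \<ge> 0" "\<And>n. norm (g n) \<le> C2 * (real (mdeg n) + 1) ^ e2"
    using assms(2) poly_bounded_def by blast
  have "norm (f n * g n) \<le> (C1 * C2) * (real (mdeg n) + 1) ^ (e1 + e2)" for n
    using mult_mono[OF C1(2) C2(2)] C1(1) by (simp add: norm_mult power_add algebra_simps)
  thus ?thesis using C1 C2 by (intro poly_boundedI[of "C1 * C2"]) auto
qed

lemma poly_bounded_prod_list: "(\<And>j. poly_bounded (f j)) \<Longrightarrow> poly_bounded (\<lambda>n. \<Prod>j\<leftarrow>js. f j n)"
  by (induction js) (auto intro: poly_bounded_mult poly_bounded_const)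

lemma rapid_mult_poly_bounded:
  assumes c: "rapid p c" and f: "poly_bounded f"
  shows "rapid p (\<lambda>n. f n * c n)"
  unfolding rapid_def
proof (intro ballI allI)
  fix r :: "'a \<Rightarrow> real" and d assume r: "r \<in> radii_dom p"
  obtain C e where C: "C \<ge> 0" "\<And>n. norm (f n) \<le> C * (real (mdeg n) + 1) ^ e"
    using f poly_bounded_def by blast
  have "(\<lambda>n. C * ((real (mdeg n) + 1) ^ (d + e) * (norm (c n) * mpow_real r n))) summable_on UNIV"
    using c r unfolding rapid_def by (intro summable_on_cmult_right) blast
  thus "(\<lambda>n. (real (mdeg n) + 1) ^ d * (norm (f n * c n) * mpow_real r n)) summable_on UNIV"
  proof (rule summable_on_comparison_test)
    fix n
    have "norm (f n * c n) * mpow_real r n \<le> (C * (real (mdeg n) + 1) ^ e) * norm (c n) * mpow_real r n"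
      by (auto simp: norm_mult intro!: mult_right_mono C mpow_real_nonneg radii_dom_nonneg[OF r])
    hence "(real (mdeg n) + 1) ^ d * (norm (f n * c n) * mpow_real r n)
            \<le> (real (mdeg n) + 1) ^ d * ((C * (real (mdeg n) + 1) ^ e) * norm (c n) * mpow_real r n)"
      by (intro mult_left_mono) auto
    thus "(real (mdeg n) + 1) ^ d * (norm (f n * c n) * mpow_real r n)
            \<le> C * ((real (mdeg n) + 1) ^ (d + e) * (norm (c n) * mpow_real r n))"
      by (simp add: power_add algebra_simps)
    show "0 \<le> (real (mdeg n) + 1) ^ d * (norm (f n * c n) * mpow_real r n)"
      by (auto intro!: mult_nonneg_nonneg mpow_real_nonneg radii_dom_nonneg[OF r])
  qed
qed

lemma rapid_add:
  assumes "rapid p c" "rapid p d"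
  shows "rapid p (\<lambda>n. c n + d n)"
  unfolding rapid_def
proof (intro ballI allI)
  fix r :: "'a \<Rightarrow> real" and e assume r: "r \<in> radii_dom p"
  define w where "w n = (real (mdeg n) + 1) ^ e * mpow_real r n" for n
  have w0: "0 \<le> w n" for n
    by (auto simp: w_def intro!: mult_nonneg_nonneg mpow_real_nonneg radii_dom_nonneg[OF r])
  have "(\<lambda>n. w n * norm (c n) + w n * norm (d n)) summable_on UNIV"
    using assms r unfolding rapid_def by (intro summable_on_add) (auto simp: w_def ac_simps)
  hence "(\<lambda>n. w n * norm (c n + d n)) summable_on UNIV"
    by (rule summable_on_comparison_test)
       (use w0 norm_triangle_ineq in \<open>auto simp: distrib_left[symmetric] intro!: mult_left_mono\<close>)
  thus "(\<lambda>n. (real (mdeg n) + 1) ^ e * (norm (c n + d n) * mpow_real r n)) summable_on UNIV"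
    by (simp add: w_def ac_simps)
qed

lemma rapid_sum:
  "finite A \<Longrightarrow> (\<And>j. j \<in> A \<Longrightarrow> rapid p (c j)) \<Longrightarrow> rapid p (\<lambda>n. \<Sum>j\<in>A. c j n)"
proof (induction A rule: finite_induct)
  case empty thus ?case by (simp add: rapid_def)
next
  case (insert j A) thus ?case by (simp add: rapid_add)
qed

lemma mseries_add:
  assumes "rapid p c" "rapid p d" "x \<in> domD p"
  shows "mseries (\<lambda>n. c n + d n) x = mseries c x + mseries d x"
  unfolding mseries_def using rapid_summable[OF assms(1,3)] rapid_summable[OF assms(2,3)]
  by (simp add: distrib_right infsum_add)

lemma mseries_cmult: "mseries (\<lambda>n. \<alpha> * c n) x = \<alpha> * mseries c x"
  unfolding mseries_def by (simp add: mult.assoc infsum_cmult_right')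

lemma mseries_sum:
  assumes "finite A" "\<And>j. j \<in> A \<Longrightarrow> rapid p (c j)" "x \<in> domD p"
  shows "mseries (\<lambda>n. \<Sum>j\<in>A. c j n) x = (\<Sum>j\<in>A. mseries (c j) x)"
  using assms
proof (induction A rule: finite_induct)
  case empty thus ?case by (simp add: mseries_def)
next
  case (insert j A)
  have "mseries (\<lambda>n. \<Sum>j\<in>insert j A. c j n) x = mseries (\<lambda>n. c j n + (\<Sum>j\<in>A. c j n)) x"
    using insert by simp
  also have "\<dots> = mseries (c j) x + mseries (\<lambda>n. \<Sum>j\<in>A. c j n) x"
    using insert by (intro mseries_add rapid_sum) auto
  finally show ?case using insert by simp
qed

lemma mult_nth_mseries:
  "x$k * mseries c x = mseries (\<lambda>n. if n k = 0 then 0 else c (n(k := n k - 1))) x"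
proof -
  define h where "h = (\<lambda>n::'a \<Rightarrow> nat. n(k := n k + 1))"
  define g where "g = (\<lambda>n. (if n k = 0 then 0 else c (n(k := n k - 1))) * mpow x n)"
  have inj: "inj h" unfolding h_def inj_def by (auto simp: fun_eq_iff split: if_splits)
  have "x$k * mseries c x = (\<Sum>\<^sub>\<infinity>n. g (h n))"
    unfolding mseries_def infsum_cmult_right'[symmetric]
    by (intro infsum_cong) (simp add: g_def h_def mpow_fun_upd mpow_split[of x _ k] algebra_simps)
  also have "\<dots> = infsum g (range h)"
    using infsum_reindex[OF inj, of g] by (simp add: o_def)
  also have "\<dots> = infsum g UNIV"
  proof (rule infsum_cong_neutral)
    fix n assume n: "n \<in> UNIV - range h"
    have "n k = 0"
    proof (cases "n k")
      case (Suc j)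
      hence "h (n(k := j)) = n" by (auto simp: h_def fun_eq_iff)
      thus ?thesis using n by (metis DiffD2 rangeI)
    qed
    thus "g n = 0" by (simp add: g_def)
  qed auto
  finally show ?thesis by (simp add: mseries_def g_def)
qed

lemma mseries_at_zero: "mseries c 0 = c (\<lambda>_. 0)"
proof -
  have "mseries c 0 = (\<Sum>\<^sub>\<infinity>n\<in>{\<lambda>_. 0}. c n * mpow 0 n)"
    unfolding mseries_def
  proof (rule infsum_cong_neutral)
    fix n :: "'a \<Rightarrow> nat" assume "n \<in> UNIV - {\<lambda>_. 0}"
    then obtain k where "n k \<noteq> 0" by (auto simp: fun_eq_iff)
    hence "mpow 0 n = 0" unfolding mpow_def by (intro prod_zero) (auto intro!: bexI[of _ k])
    thus "c n * mpow 0 n = 0" by simp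
  qed auto
  thus ?thesis by (simp add: mpow_def)
qed

section \<open>Euler operators on twisted series \<open>x\<^sup>\<mu> \<Sum> c\<^sub>n x\<^sup>n\<close>\<close>

lemma rapid_mult_nth_affine: "rapid p c \<Longrightarrow> rapid p (\<lambda>n. (\<alpha> + of_nat (n k)) * c n)"
  by (intro rapid_mult_poly_bounded poly_bounded_add poly_bounded_const poly_bounded_nth)

lemma exp_eq_imp_eq_if_close:
  fixes w z :: complex
  assumes "exp w = exp z" "norm (w - z) < 1"
  shows "w = z"
proof -
  obtain n :: int where n: "w = z + (of_int (2 * n) * pi) * \<i>" using assms(1) exp_eq by blast
  have nn: "norm (w - z) = 2 * \<bar>real_of_int n\<bar> * pi" by (simp add: n norm_mult)
  have "n = 0"
  proof (rule ccontr)
    assume "n \<noteq> 0"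
    hence "2 * 1 * pi \<le> 2 * \<bar>real_of_int n\<bar> * pi" by (intro mult_right_mono mult_left_mono) auto
    thus False using assms(2) nn pi_gt3 by linarith
  qed
  thus ?thesis using n by simp
qed

locale log_branches =
  fixes p :: nat and U :: "(complex^'m::finite) set" and L :: "'m \<Rightarrow> complex^'m \<Rightarrow> complex"
  assumes p: "p \<ge> 1" and open_U: "open U" and U_domD: "U \<subseteq> domD p"
    and U_nonzero: "\<And>x k. x \<in> U \<Longrightarrow> x$k \<noteq> 0"
    and continuous_L: "\<And>k. continuous_on U (L k)"
    and exp_L: "\<And>k x. x \<in> U \<Longrightarrow> exp (L k x) = x$k"
begin

definition branch_pow :: "('m \<Rightarrow> complex) \<Rightarrow> complex^'m \<Rightarrow> complex" where
  "branch_pow \<mu> x = (\<Prod>k\<in>UNIV. exp (\<mu> k * L k x))"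

definition pow_series :: "('m \<Rightarrow> complex) \<Rightarrow> (('m \<Rightarrow> nat) \<Rightarrow> complex) \<Rightarrow> complex^'m \<Rightarrow> complex" where
  "pow_series \<mu> c x = branch_pow \<mu> x * mseries c x"

lemma in_U_domD: "x \<in> U \<Longrightarrow> x \<in> domD p"
  using U_domD by auto

lemma open_line_preimage: "open ((\<lambda>z. upd x k z) -` U)"
  by (rule open_vimage[OF open_U continuous_on_upd])

lemma eventually_upd_in_U: "x \<in> U \<Longrightarrow> eventually (\<lambda>z. upd x k z \<in> U) (nhds (x$k))"
  unfolding eventually_nhds
  by (rule exI[of _ "(\<lambda>z. upd x k z) -` U"]) (simp add: open_line_preimage upd_same)

lemma isCont_L_line: "x \<in> U \<Longrightarrow> isCont (\<lambda>z. L l (upd x k z)) (x$k)"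
proof -
  assume x: "x \<in> U"
  have "continuous_on ((\<lambda>z. upd x k z) -` U) (\<lambda>z. L l (upd x k z))"
    by (rule continuous_on_compose2[OF continuous_L continuous_on_upd]) auto
  moreover have "x$k \<in> (\<lambda>z. upd x k z) -` U" using x by (simp add: upd_same)
  ultimately show ?thesis using open_line_preimage continuous_on_eq_continuous_at by blast
qed

text \<open>Along the \<open>k\<close>-th coordinate line the other branches \<open>L l\<close> stay locally constant, since they
  are continuous and take values in the discrete set \<open>L l x + 2\<pi>i\<int>\<close>.\<close>
lemma eventually_L_line_const:
  assumes x: "x \<in> U" and lk: "l \<noteq> k"
  shows "eventually (\<lambda>z. L l (upd x k z) = L l x) (nhds (x$k))"
proof -
  have "((\<lambda>z. L l (upd x k z)) \<longlongrightarrow> L l x) (at (x$k))"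
    using isCont_L_line[OF x, where l=l and k=k] by (simp add: isCont_def upd_same)
  hence "eventually (\<lambda>z. dist (L l (upd x k z)) (L l x) < 1) (at (x$k))"
    by (rule tendstoD) simp
  hence "eventually (\<lambda>z. dist (L l (upd x k z)) (L l x) < 1) (nhds (x$k))"
    by (simp add: eventually_nhds_conv_at upd_same)
  thus ?thesis using eventually_upd_in_U[OF x, of k]
  proof eventually_elim
    case (elim z)
    have "exp (L l (upd x k z)) = exp (L l x)"
      using exp_L[OF elim(2)] exp_L[OF x] lk by (simp add: upd_nth)
    thus ?case using elim(1) exp_eq_imp_eq_if_close by (simp add: dist_norm)
  qed
qed

lemma L_line_has_field_derivative:
  assumes x: "x \<in> U"
  shows "((\<lambda>z. L k (upd x k z)) has_field_derivative inverse (x$k)) (at (x$k))"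
proof -
  have "((\<lambda>z. L k (upd x k z)) has_field_derivative inverse (exp (L k (upd x k (x$k))))) (at (x$k))"
  proof (rule has_field_derivative_inverse_basic[where f=exp and t="(\<lambda>z. upd x k z) -` U"])
    show "continuous (at (x$k)) (\<lambda>z. L k (upd x k z))" using isCont_L_line[OF x] by simp
    show "x$k \<in> (\<lambda>z. upd x k z) -` U" using x by (simp add: upd_same)
    show "\<And>z. z \<in> (\<lambda>z. upd x k z) -` U \<Longrightarrow> exp (L k (upd x k z)) = z"
      by (simp add: exp_L upd_nth)
  qed (auto simp: open_line_preimage intro: DERIV_exp)
  thus ?thesis using exp_L[OF x] by (simp add: upd_same)
qed

lemma branch_pow_has_field_derivative:
  assumes x: "x \<in> U"
  shows "((\<lambda>z. branch_pow \<mu> (upd x k z)) has_field_derivative branch_pow \<mu> x * \<mu> k * inverse (x$k)) (at (x$k))"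
proof -
  define Q where "Q = (\<Prod>l\<in>-{k}. exp (\<mu> l * L l x))"
  have "eventually (\<lambda>z. \<forall>l\<in>-{k}. L l (upd x k z) = L l x) (nhds (x$k))"
    by (rule eventually_ball_finite) (auto intro: eventually_L_line_const[OF x])
  hence ev: "eventually (\<lambda>z. branch_pow \<mu> (upd x k z) = exp (\<mu> k * L k (upd x k z)) * Q) (nhds (x$k))"
  proof eventually_elim
    case (elim z)
    thus ?case unfolding branch_pow_def Q_def by (subst prod_UNIV_split[of _ k]) (auto intro!: prod.cong)
  qed
  have "((\<lambda>z. exp (\<mu> k * L k (upd x k z)) * Q) has_field_derivative
          exp (\<mu> k * L k (upd x k (x$k))) * (\<mu> k * inverse (x$k)) * Q) (at (x$k))"
    by (auto intro!: derivative_eq_intros L_line_has_field_derivative[OF x])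
  moreover have "branch_pow \<mu> x = exp (\<mu> k * L k (upd x k (x$k))) * Q"
    unfolding branch_pow_def Q_def upd_same by (rule prod_UNIV_split)
  ultimately show ?thesis using DERIV_cong_ev[OF refl ev] by (simp add: algebra_simps)
qed

lemma pow_series_has_field_derivative:
  assumes c: "rapid p c" and x: "x \<in> U"
  shows "((\<lambda>z. pow_series \<mu> c (upd x k z)) has_field_derivative
           branch_pow \<mu> x * \<mu> k * inverse (x$k) * mseries c x
           + (\<Sum>\<^sub>\<infinity>n. c n * of_nat (n k) * mpow x (n(k := n k - 1))) * branch_pow \<mu> x) (at (x$k))"
  using DERIV_mult[OF branch_pow_has_field_derivative[OF x]
                      mseries_has_field_derivative(2)[OF c p in_U_domD[OF x]]]
  by (simp add: pow_series_def upd_same)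

lemma theta_pow_series:
  assumes c: "rapid p c" and x: "x \<in> U"
  shows "theta k (pow_series \<mu> c) x = pow_series \<mu> (\<lambda>n. (\<mu> k + of_nat (n k)) * c n) x"
proof -
  define D where "D = (\<Sum>\<^sub>\<infinity>n. c n * of_nat (n k) * mpow x (n(k := n k - 1)))"
  have xD: "x \<in> domD p" by (rule in_U_domD[OF x])
  have "x$k * D = theta k (mseries c) x"
    using mseries_has_field_derivative(2)[OF c p xD, of k] by (simp add: theta_def D_def DERIV_imp_deriv)
  also have "\<dots> = mseries (\<lambda>n. of_nat (n k) * c n) x" by (rule theta_mseries[OF c p xD])
  finally have thD: "x$k * D = mseries (\<lambda>n. of_nat (n k) * c n) x" .
  have "theta k (pow_series \<mu> c) x = branch_pow \<mu> x * (\<mu> k * mseries c x + x$k * D)"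
    using DERIV_imp_deriv[OF pow_series_has_field_derivative[OF c x, of \<mu> k]] U_nonzero[OF x, of k]
    by (simp add: theta_def D_def field_simps)
  also have "\<mu> k * mseries c x + x$k * D = mseries (\<lambda>n. \<mu> k * c n) x + mseries (\<lambda>n. of_nat (n k) * c n) x"
    by (simp add: thD mseries_cmult)
  also have "\<dots> = mseries (\<lambda>n. (\<mu> k + of_nat (n k)) * c n) x"
    unfolding distrib_right
    by (rule mseries_add[symmetric]) (auto intro!: rapid_mult_poly_bounded c poly_bounded_nth poly_bounded_const xD)
  finally show ?thesis by (simp add: pow_series_def[abs_def])
qed

lemma pow_series_add:
  "rapid p c \<Longrightarrow> rapid p d \<Longrightarrow> x \<in> U \<Longrightarrow>
     pow_series \<mu> c x + pow_series \<mu> d x = pow_series \<mu> (\<lambda>n. c n + d n) x"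
  by (simp add: pow_series_def mseries_add in_U_domD distrib_left)

lemma pow_series_cmult: "\<alpha> * pow_series \<mu> c x = pow_series \<mu> (\<lambda>n. \<alpha> * c n) x"
  by (simp add: pow_series_def mseries_cmult)

lemma theta_cong:
  assumes x: "x \<in> U" and fg: "\<And>y. y \<in> U \<Longrightarrow> f y = g y"
  shows "theta k f x = theta k g x"
proof -
  have "eventually (\<lambda>z. f (upd x k z) = g (upd x k z)) (nhds (x$k))"
    using eventually_upd_in_U[OF x, of k] by eventually_elim (rule fg)
  hence "deriv (\<lambda>z. f (upd x k z)) (x$k) = deriv (\<lambda>z. g (upd x k z)) (x$k)"
    by (rule deriv_cong_ev) simp
  thus ?thesis by (simp add: theta_def)
qed

lemma shift_theta_pow_series:
  assumes c: "rapid p c" and f: "\<And>y. y \<in> U \<Longrightarrow> f y = pow_series \<mu> c y" and x: "x \<in> U"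
  shows "shift_theta k \<beta> f x = pow_series \<mu> (\<lambda>n. (\<beta> + \<mu> k + of_nat (n k)) * c n) x"
proof -
  have "shift_theta k \<beta> f x = \<beta> * pow_series \<mu> c x + theta k (pow_series \<mu> c) x"
    unfolding shift_theta_def using f[OF x] theta_cong[OF x f] by simp
  also have "\<dots> = pow_series \<mu> (\<lambda>n. \<beta> * c n) x + pow_series \<mu> (\<lambda>n. (\<mu> k + of_nat (n k)) * c n) x"
    by (simp add: theta_pow_series[OF c x] pow_series_cmult)
  also have "\<dots> = pow_series \<mu> (\<lambda>n. \<beta> * c n + (\<mu> k + of_nat (n k)) * c n) x"
    by (rule pow_series_add)
       (auto intro: rapid_mult_poly_bounded[OF c poly_bounded_const] rapid_mult_nth_affine[OF c] x)
  finally show ?thesis by (simp add: algebra_simps)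
qed

lemma shift_total_pow_series:
  assumes c: "rapid p c" and f: "\<And>y. y \<in> U \<Longrightarrow> f y = pow_series \<mu> c y" and x: "x \<in> U"
  shows "shift_total \<alpha> f x = pow_series \<mu> (\<lambda>n. (\<alpha> + (\<Sum>k\<in>UNIV. \<mu> k) + of_nat (mdeg n)) * c n) x"
proof -
  have xD: "x \<in> domD p" by (rule in_U_domD[OF x])
  have "shift_total \<alpha> f x = \<alpha> * pow_series \<mu> c x + (\<Sum>k\<in>UNIV. theta k (pow_series \<mu> c) x)"
    unfolding shift_total_def using f[OF x] theta_cong[OF x f] by simp
  also have "\<dots> = branch_pow \<mu> x *
      (mseries (\<lambda>n. \<alpha> * c n) x + (\<Sum>k\<in>UNIV. mseries (\<lambda>n. (\<mu> k + of_nat (n k)) * c n) x))"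
    by (simp add: theta_pow_series[OF c x] pow_series_def mseries_cmult sum_distrib_left algebra_simps)
  also have "(\<Sum>k\<in>UNIV. mseries (\<lambda>n. (\<mu> k + of_nat (n k)) * c n) x)
           = mseries (\<lambda>n. \<Sum>k\<in>UNIV. (\<mu> k + of_nat (n k)) * c n) x"
    by (rule mseries_sum[symmetric]) (auto intro: rapid_mult_nth_affine[OF c] xD)
  also have "mseries (\<lambda>n. \<alpha> * c n) x + \<dots> = mseries (\<lambda>n. \<alpha> * c n + (\<Sum>k\<in>UNIV. (\<mu> k + of_nat (n k)) * c n)) x"
    by (rule mseries_add[symmetric])
       (auto intro!: rapid_sum rapid_mult_nth_affine[OF c] rapid_mult_poly_bounded[OF c] poly_bounded_const xD)
  finally show ?thesis
    by (simp add: pow_series_def mdeg_def sum_distrib_left sum.distrib algebra_simps)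
qed

text \<open>Both sides of the system are iterates of operators of this kind.\<close>
lemma foldr_pow_series:
  assumes step: "\<And>j g c x. rapid p c \<Longrightarrow> (\<And>y. y \<in> U \<Longrightarrow> g y = pow_series \<mu> c y) \<Longrightarrow> x \<in> U \<Longrightarrow>
                   Op j g x = pow_series \<mu> (\<lambda>n. \<phi> j n * c n) x"
    and \<phi>: "\<And>j. poly_bounded (\<phi> j)"
    and c: "rapid p c" and f: "\<And>y. y \<in> U \<Longrightarrow> f y = pow_series \<mu> c y"
  shows "x \<in> U \<Longrightarrow> foldr Op js f x = pow_series \<mu> (\<lambda>n. (\<Prod>j\<leftarrow>js. \<phi> j n) * c n) x"
proof (induction js arbitrary: x)
  case Nil thus ?case using f by simp
next
  case (Cons j js)
  have "rapid p (\<lambda>n. (\<Prod>j\<leftarrow>js. \<phi> j n) * c n)"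
    by (intro rapid_mult_poly_bounded c poly_bounded_prod_list \<phi>)
  from step[OF this Cons.IH Cons.prems] show ?case by (simp add: mult.assoc)
qed

lemma mult_nth_pow_series:
  "x$k * pow_series \<mu> c x = pow_series \<mu> (\<lambda>n. if n k = 0 then 0 else c (n(k := n k - 1))) x"
  by (simp add: pow_series_def mult_nth_mseries[symmetric] algebra_simps)

end

section \<open>The functions \<open>\<Phi>\<^sub>J\<close> solve the system\<close>

lemma prod_list_upt: "(\<Prod>j\<leftarrow>[m..<n]. f j) = (\<Prod>j\<in>{m..<n}. f j)"
  by (simp add: prod.distinct_set_conv_list[symmetric])

text \<open>The shift by \<open>\<mu> = 1 - b\<^sub>j\<^sub>0\<close> turns the left-hand factors \<open>(\<mu> + m + 1)\<Prod>\<^sub>j (b\<^sub>j - 1 + \<mu> + m + 1)\<close>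
  into \<open>(m + 1)\<Prod>\<^sub>j (\<eta>\<^sub>j\<^sub>0(b)\<^sub>j + m)\<close>: the factor \<open>j = j\<^sub>0\<close> (or the first factor if \<open>j\<^sub>0 = p\<close>)
  becomes \<open>m + 1\<close>, which is what makes \<open>\<eta>\<^sub>j\<^sub>0(b)\<close> the right lower parameters.\<close>
lemma eta_shift_factor:
  fixes bk :: "nat \<Rightarrow> complex"
  assumes bp: "bk p = 1" and j0: "j0 \<in> {1..p}"
  shows "(1 - bk j0 + of_nat (Suc m)) * (\<Prod>j\<in>{1..<p}. bk j - 1 + (1 - bk j0) + of_nat (Suc m))
       = of_nat (Suc m) * (\<Prod>j\<in>{1..<p}. eta p j0 bk j + of_nat m)"
proof (cases "j0 = p")
  case True
  have "(\<Prod>j\<in>{1..<p}. eta p j0 bk j + of_nat m) = (\<Prod>j\<in>{1..<p}. bk j - 1 + (1 - bk j0) + of_nat (Suc m))"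
    by (rule prod.cong) (auto simp: eta_def True bp algebra_simps)
  thus ?thesis using True bp by simp
next
  case False
  hence j0: "j0 \<in> {1..<p}" using j0 by auto
  have lhs: "(\<Prod>j\<in>{1..<p}. bk j - 1 + (1 - bk j0) + of_nat (Suc m))
        = of_nat (Suc m) * (\<Prod>j\<in>{1..<p} - {j0}. bk j - 1 + (1 - bk j0) + of_nat (Suc m))"
    by (subst prod.remove[OF _ j0]) auto
  have rhs: "(\<Prod>j\<in>{1..<p}. eta p j0 bk j + of_nat m)
        = (2 - bk j0 + of_nat m) * (\<Prod>j\<in>{1..<p} - {j0}. eta p j0 bk j + of_nat m)"
    using j0 by (subst prod.remove[OF _ j0]) (auto simp: eta_def algebra_simps)
  have "(\<Prod>j\<in>{1..<p} - {j0}. eta p j0 bk j + of_nat m)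
      = (\<Prod>j\<in>{1..<p} - {j0}. bk j - 1 + (1 - bk j0) + of_nat (Suc m))"
    by (rule prod.cong) (auto simp: eta_def algebra_simps)
  thus ?thesis unfolding lhs rhs by (simp add: algebra_simps)
qed

lemma mdeg_fun_upd: "mdeg (n(k := m)) + n k = mdeg n + m"
  by (simp add: mdeg_def sum.remove[of UNIV k] Compl_eq_Diff_UNIV[symmetric] algebra_simps)

lemma FC_coeff_recurrence:
  fixes b :: "nat \<Rightarrow> 'm::finite \<Rightarrow> complex"
  assumes nz: "\<And>j l t. j \<in> {1..<p} \<Longrightarrow> pochhammer (b j l) t \<noteq> 0" and nk: "n k = Suc m"
  shows "FC_coeff p a b n * (of_nat (Suc m) * (\<Prod>j\<in>{1..<p}. b j k + of_nat m))
       = (\<Prod>i\<in>{1..p}. a i + of_nat (mdeg (n(k := m)))) * FC_coeff p a b (n(k := m))"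
proof -
  define n' where "n' = n(k := m)"
  define D where "D l t = (\<Prod>j\<in>{1..<p}. pochhammer (b j l) t) * fact t" for l t
  define X where "X = of_nat (Suc m) * (\<Prod>j\<in>{1..<p}. b j k + of_nat m)"
  have "b j k + of_nat m \<noteq> 0" if "j \<in> {1..<p}" for j
    using nz[OF that, of k "Suc m"] by (auto simp: pochhammer_Suc)
  hence X0: "X \<noteq> 0" by (auto simp: X_def simp del: of_nat_Suc)
  have "D k (Suc m) = D k m * X"
    by (simp add: D_def X_def pochhammer_Suc prod.distrib fact_Suc del: of_nat_Suc)
  moreover have "(\<Prod>l\<in>-{k}. D l (n' l)) = (\<Prod>l\<in>-{k}. D l (n l))"
    by (rule prod.cong) (auto simp: n'_def)
  ultimately have den: "(\<Prod>l\<in>UNIV. D l (n l)) = (\<Prod>l\<in>UNIV. D l (n' l)) * X"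
    using nk by (simp add: prod_UNIV_split[of _ k] n'_def algebra_simps)
  have "mdeg n = Suc (mdeg n')" using mdeg_fun_upd[of n k m] nk by (simp add: n'_def)
  hence num: "(\<Prod>i\<in>{1..p}. pochhammer (a i) (mdeg n))
      = (\<Prod>i\<in>{1..p}. pochhammer (a i) (mdeg n')) * (\<Prod>i\<in>{1..p}. a i + of_nat (mdeg n'))"
    by (simp add: pochhammer_Suc prod.distrib)
  have "FC_coeff p a b n * X = (\<Prod>i\<in>{1..p}. pochhammer (a i) (mdeg n)) / (\<Prod>l\<in>UNIV. D l (n' l))"
    unfolding FC_coeff_def D_def[symmetric] den using X0 by simp
  also have "\<dots> = (\<Prod>i\<in>{1..p}. a i + of_nat (mdeg n')) * FC_coeff p a b n'"
    unfolding FC_coeff_def D_def[symmetric] num by simp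
  finally show ?thesis by (simp add: X_def n'_def)
qed

lemma FC_system_coeff_identity:
  fixes a :: "nat \<Rightarrow> complex" and b :: "nat \<Rightarrow> 'm::finite \<Rightarrow> complex"
  assumes bp: "b p k = 1" and J: "J k \<in> {1..p}"
    and nz: "\<And>j l t. j \<in> {1..<p} \<Longrightarrow> pochhammer (eta p (J l) (\<lambda>j. b j l) j) t \<noteq> 0"
  defines "\<mu> \<equiv> \<lambda>k. 1 - b (J k) k"
  defines "c \<equiv> FC_coeff p (\<lambda>i. a i + (\<Sum>k\<in>UNIV. \<mu> k)) (\<lambda>i k. eta p (J k) (\<lambda>j. b j k) i)"
  shows "(\<mu> k + of_nat (n k)) * ((\<Prod>j\<leftarrow>[1..<p]. b j k - 1 + \<mu> k + of_nat (n k)) * c n)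
       = (if n k = 0 then 0
          else (\<Prod>i\<leftarrow>[1..<p+1]. a i + (\<Sum>k\<in>UNIV. \<mu> k) + of_nat (mdeg (n(k := n k - 1))))
               * c (n(k := n k - 1)))"
proof (cases "n k")
  case 0
  have "\<mu> k * (\<Prod>j\<in>{1..<p}. b j k - 1 + \<mu> k) = 0"
  proof (cases "J k = p")
    case True thus ?thesis by (simp add: \<mu>_def bp)
  next
    case False
    hence "J k \<in> {1..<p}" using J by auto
    hence "(\<Prod>j\<in>{1..<p}. b j k - 1 + \<mu> k) = 0"
      by (intro prod_zero) (auto simp: \<mu>_def intro!: bexI[of _ "J k"])
    thus ?thesis by simp
  qed
  thus ?thesis using 0 by (simp add: prod_list_upt) blast
next
  case (Suc m)
  have "(\<mu> k + of_nat (Suc m)) * (\<Prod>j\<in>{1..<p}. b j k - 1 + \<mu> k + of_nat (Suc m)) * c n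
      = of_nat (Suc m) * (\<Prod>j\<in>{1..<p}. eta p (J k) (\<lambda>j. b j k) j + of_nat m) * c n"
    using eta_shift_factor[of "\<lambda>j. b j k" p "J k" m, OF bp J] by (simp add: \<mu>_def)
  also have "\<dots> = (\<Prod>i\<in>{1..p}. a i + (\<Sum>k\<in>UNIV. \<mu> k) + of_nat (mdeg (n(k := m)))) * c (n(k := m))"
    using FC_coeff_recurrence[where b="\<lambda>i k. eta p (J k) (\<lambda>j. b j k) i" and n=n and k=k and m=m and p=p and a="\<lambda>i. a i + (\<Sum>k\<in>UNIV. \<mu> k)", OF nz Suc] by (simp add: c_def add.assoc mult_ac)
  finally show ?thesis
    using Suc unfolding prod_list_upt
    by (simp add: atLeastLessThanSuc_atLeastAtMost mult.assoc del: of_nat_Suc)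
qed

context log_branches
begin

lemma PhiJ_eq_pow_series:
  "PhiJ p a b L J = pow_series (\<lambda>k. 1 - b (J k) k)
     (FC_coeff p (\<lambda>i. a i + (\<Sum>k\<in>UNIV. 1 - b (J k) k)) (\<lambda>i k. eta p (J k) (\<lambda>j. b j k) i))"
  by (simp add: fun_eq_iff PhiJ_def Let_def pow_series_def branch_pow_def FC_eq_mseries)

lemma solves_FC_PhiJ:
  fixes a :: "nat \<Rightarrow> complex" and b :: "nat \<Rightarrow> 'm \<Rightarrow> complex"
  assumes bp: "\<And>k. b p k = 1" and J: "\<And>k. J k \<in> {1..p}"
    and nz: "\<And>j k t. j \<in> {1..<p} \<Longrightarrow> pochhammer (eta p (J k) (\<lambda>j. b j k) j) t \<noteq> 0"
  shows "solves_FC p a b U (PhiJ p a b L J)"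
  unfolding solves_FC_def
proof (intro allI ballI)
  fix k x assume x: "x \<in> U"
  define \<mu> where "\<mu> = (\<lambda>k. 1 - b (J k) k)"
  define c where "c = FC_coeff p (\<lambda>i. a i + (\<Sum>k\<in>UNIV. \<mu> k)) (\<lambda>i k. eta p (J k) (\<lambda>j. b j k) i)"
  define \<phi> where "\<phi> j n = b j k - 1 + \<mu> k + of_nat (n k)" for j and n :: "'m \<Rightarrow> nat"
  define \<psi> where "\<psi> i n = a i + (\<Sum>k\<in>UNIV. \<mu> k) + of_nat (mdeg n)" for i and n :: "'m \<Rightarrow> nat"
  have c: "rapid p c" unfolding c_def by (rule rapid_FC_coeff[OF p nz])
  have Phi: "\<And>y. y \<in> U \<Longrightarrow> PhiJ p a b L J y = pow_series \<mu> c y"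
    by (simp add: PhiJ_eq_pow_series \<mu>_def c_def)
  have c\<phi>: "rapid p (\<lambda>n. (\<Prod>j\<leftarrow>[1..<p]. \<phi> j n) * c n)"
    unfolding \<phi>_def
    by (intro rapid_mult_poly_bounded c poly_bounded_prod_list poly_bounded_add poly_bounded_const
              poly_bounded_nth)
  have lhs_fold: "foldr (\<lambda>j g. shift_theta k (b j k - 1) g) [1..<p] (PhiJ p a b L J) y
          = pow_series \<mu> (\<lambda>n. (\<Prod>j\<leftarrow>[1..<p]. \<phi> j n) * c n) y" if "y \<in> U" for y
  proof (rule foldr_pow_series[where Op="\<lambda>j. shift_theta k (b j k - 1)" and \<phi>=\<phi>, OF _ _ c Phi that])
    show "shift_theta k (b j k - 1) g z = pow_series \<mu> (\<lambda>n. \<phi> j n * c' n) z"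
      if "rapid p c'" "\<And>y. y \<in> U \<Longrightarrow> g y = pow_series \<mu> c' y" "z \<in> U" for j g c' z
      unfolding \<phi>_def by (rule shift_theta_pow_series[OF that])
    show "poly_bounded (\<phi> j)" for j
      unfolding \<phi>_def by (intro poly_bounded_add poly_bounded_const poly_bounded_nth)
  qed
  have lhs: "FC_lhs p b k (PhiJ p a b L J) x
          = pow_series \<mu> (\<lambda>n. (\<mu> k + of_nat (n k)) * ((\<Prod>j\<leftarrow>[1..<p]. \<phi> j n) * c n)) x"
    using theta_cong[OF x lhs_fold, where k=k] theta_pow_series[OF c\<phi> x, where \<mu>=\<mu> and k=k] by (simp add: FC_lhs_def)
  have rhs_fold: "foldr (\<lambda>i g. shift_total (a i) g) [1..<p+1] (PhiJ p a b L J) x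
          = pow_series \<mu> (\<lambda>n. (\<Prod>i\<leftarrow>[1..<p+1]. \<psi> i n) * c n) x"
  proof (rule foldr_pow_series[where Op="\<lambda>i. shift_total (a i)" and \<phi>=\<psi>, OF _ _ c Phi x])
    show "shift_total (a i) g z = pow_series \<mu> (\<lambda>n. \<psi> i n * c' n) z"
      if "rapid p c'" "\<And>y. y \<in> U \<Longrightarrow> g y = pow_series \<mu> c' y" "z \<in> U" for i g c' z
      unfolding \<psi>_def by (rule shift_total_pow_series[OF that])
    show "poly_bounded (\<psi> i)" for i
      unfolding \<psi>_def by (intro poly_bounded_add poly_bounded_const poly_bounded_mdeg)
  qed
  have rhs: "FC_rhs p a k (PhiJ p a b L J) x
          = pow_series \<mu> (\<lambda>n. if n k = 0 then 0 else (\<Prod>i\<leftarrow>[1..<p+1]. \<psi> i (n(k := n k - 1))) * c (n(k := n k - 1))) x"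
    unfolding FC_rhs_def rhs_fold by (rule mult_nth_pow_series)
  have coeff: "(\<mu> k + of_nat (n k)) * ((\<Prod>j\<leftarrow>[1..<p]. \<phi> j n) * c n)
      = (if n k = 0 then 0 else (\<Prod>i\<leftarrow>[1..<p+1]. \<psi> i (n(k := n k - 1))) * c (n(k := n k - 1)))" for n
    unfolding \<phi>_def \<psi>_def c_def \<mu>_def by (rule FC_system_coeff_identity[OF bp J nz])
  show "FC_lhs p b k (PhiJ p a b L J) x = FC_rhs p a k (PhiJ p a b L J) x"
    unfolding lhs rhs coeff ..
qed

end

section \<open>Linear independence\<close>

context log_branches
begin

lemma holo_several_pow_series:
  assumes c: "rapid p c"
  shows "holo_several U (pow_series \<mu> c)"
  unfolding holo_several_def
proof (intro conjI ballI allI)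
  show "continuous_on U (pow_series \<mu> c)"
    unfolding pow_series_def[abs_def] branch_pow_def
    by (intro continuous_intros continuous_on_subset[OF continuous_on_mseries[OF c p] U_domD]
              continuous_on_subset[OF continuous_L]) auto
  show "(\<lambda>z. pow_series \<mu> c (upd x k z)) field_differentiable at (x$k)" if "x \<in> U" for x k
    using pow_series_has_field_derivative[OF c that] field_differentiable_def by blast
qed

end

lemma exists_poly_indicator:
  fixes \<Lambda> :: "nat \<Rightarrow> complex"
  assumes inj: "inj_on \<Lambda> A" and fin: "finite A" and j0: "j0 \<in> A"
  obtains q where "\<And>j. j \<in> A \<Longrightarrow> poly q (\<Lambda> j) = (if j = j0 then 1 else 0)"
proof -
  define d where "d = (\<Prod>j\<in>A-{j0}. \<Lambda> j0 - \<Lambda> j)"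
  define q where "q = smult (1 / d) (\<Prod>j\<in>A-{j0}. [:-\<Lambda> j, 1:])"
  have d0: "d \<noteq> 0" unfolding d_def using inj j0 fin by (auto simp: inj_on_def)
  have "poly q (\<Lambda> j) = (if j = j0 then 1 else 0)" if j: "j \<in> A" for j
  proof (cases "j = j0")
    case True thus ?thesis using d0 by (simp add: q_def poly_prod d_def)
  next
    case False
    hence "(\<Prod>i\<in>A-{j0}. \<Lambda> j - \<Lambda> i) = 0" using j fin by (intro prod_zero) auto
    thus ?thesis using False by (simp add: q_def poly_prod)
  qed
  thus ?thesis by (rule that)
qed

text \<open>Distinct characters \<open>w \<mapsto> \<Prod>\<^sub>k \<Lambda>\<^sub>k(J\<^sub>k)\<^sup>w\<^sup>\<^sub>k\<close> of \<open>\<nat>\<^sup>m\<close> are linearly independent: pairing the relation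
  with the coefficients of a product of Lagrange indicator polynomials isolates a single \<open>J\<close>.\<close>
lemma power_characters_independent:
  fixes v :: "('m::finite \<Rightarrow> nat) \<Rightarrow> complex" and \<Lambda> :: "'m \<Rightarrow> nat \<Rightarrow> complex"
  assumes inj: "\<And>k. inj_on (\<Lambda> k) {1..p}"
    and rel: "\<And>w::'m \<Rightarrow> nat. (\<Sum>J\<in>{J. \<forall>k. J k \<in> {1..p}}. v J * (\<Prod>k\<in>UNIV. \<Lambda> k (J k) ^ w k)) = 0"
    and J0: "J0 \<in> {J. \<forall>k. J k \<in> {1..p}}"
  shows "v J0 = 0"
proof -
  define JS where "JS = {J::'m \<Rightarrow> nat. \<forall>k. J k \<in> {1..p}}"
  have "JS = PiE UNIV (\<lambda>_. {1..p})" by (auto simp: JS_def PiE_UNIV_domain)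
  hence finJS: "finite JS" by (simp add: finite_PiE)
  have "\<forall>k. \<exists>q. \<forall>j\<in>{1..p}. poly q (\<Lambda> k j) = (if j = J0 k then 1 else 0)"
    using exists_poly_indicator[OF inj] J0 by (metis finite_atLeastAtMost mem_Collect_eq)
  then obtain q where q: "\<And>k j. j \<in> {1..p} \<Longrightarrow> poly (q k) (\<Lambda> k j) = (if j = J0 k then 1 else 0)"
    by metis
  define W where "W = PiE (UNIV::'m set) (\<lambda>k. {..degree (q k)})"
  have poly_prod: "(\<Sum>w\<in>W. \<Prod>k\<in>UNIV. coeff (q k) (w k) * \<Lambda> k (J k) ^ w k)
                 = (\<Prod>k\<in>UNIV. poly (q k) (\<Lambda> k (J k)))" for J
    unfolding W_def by (subst prod_sum_PiE[symmetric]) (auto simp: poly_altdef mult_ac)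
  have "0 = (\<Sum>w\<in>W. (\<Prod>k\<in>UNIV. coeff (q k) (w k)) * (\<Sum>J\<in>JS. v J * (\<Prod>k\<in>UNIV. \<Lambda> k (J k) ^ w k)))"
    using rel by (simp add: JS_def)
  also have "\<dots> = (\<Sum>J\<in>JS. v J * (\<Sum>w\<in>W. \<Prod>k\<in>UNIV. coeff (q k) (w k) * \<Lambda> k (J k) ^ w k))"
    by (simp add: sum_distrib_left sum_distrib_right prod.distrib algebra_simps sum.swap[of _ W])
  also have "\<dots> = (\<Sum>J\<in>JS. v J * (if J = J0 then 1 else 0))"
  proof (rule sum.cong[OF refl])
    fix J assume "J \<in> JS"
    hence "(\<Prod>k\<in>UNIV. poly (q k) (\<Lambda> k (J k))) = (\<Prod>k\<in>UNIV. if J k = J0 k then 1 else 0)"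
      by (intro prod.cong) (auto simp: JS_def q)
    also have "\<dots> = (if J = J0 then 1 else 0)" by (auto simp: fun_eq_iff prod_zero_iff)
    finally show "v J * (\<Sum>w\<in>W. \<Prod>k\<in>UNIV. coeff (q k) (w k) * \<Lambda> k (J k) ^ w k)
                = v J * (if J = J0 then 1 else 0)" by (simp add: poly_prod)
  qed
  also have "\<dots> = v J0" using finJS J0 by (simp add: JS_def if_distrib cong: if_cong)
  finally show ?thesis by simp
qed

lemma norm_vec_le_sum_norm: "norm (s::complex^'m::finite) \<le> (\<Sum>k\<in>UNIV. norm (s$k))"
  unfolding norm_vec_def by (rule L2_set_le_sum) auto

lemma holomorphic_half_plane_vanishes:
  assumes f: "f holomorphic_on {z. Re z < \<delta>}" and e: "0 < e" "e \<le> \<delta>"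
    and zero: "\<And>z. norm z < e \<Longrightarrow> f z = 0" and w: "Re w < \<delta>"
  shows "f w = 0"
proof (rule analytic_continuation[OF f])
  show "ball 0 e \<subseteq> {z. Re z < \<delta>}"
  proof
    fix z :: complex assume "z \<in> ball 0 e"
    thus "z \<in> {z. Re z < \<delta>}" using e complex_Re_le_cmod[of z] by simp
  qed
  show "(0::complex) islimpt ball 0 e" using e by (simp add: islimpt_ball)
qed (use e zero w in \<open>auto simp: open_halfspace_Re_lt convex_connected convex_halfspace_Re_lt\<close>)

text \<open>Analytic continuation one coordinate at a time, starting from a small polydisc around \<open>0\<close>.\<close>
lemma vanishes_on_half_planes:
  fixes h :: "complex^'m::finite \<Rightarrow> complex" and s :: "complex^'m"
  assumes \<delta>: "\<delta> > 0" and \<epsilon>: "\<epsilon> > 0"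
    and holo: "\<And>s k. (\<And>j. j \<noteq> k \<Longrightarrow> Re (s$j) < \<delta>) \<Longrightarrow> (\<lambda>z. h (upd s k z)) holomorphic_on {z. Re z < \<delta>}"
    and zero: "\<And>s. norm s < \<epsilon> \<Longrightarrow> h s = 0"
    and s: "\<forall>k. Re (s$k) < \<delta>"
  shows "h s = 0"
proof -
  define e where "e = min \<delta> (\<epsilon> / real CARD('m))"
  have e: "e > 0" "e \<le> \<delta>" using \<delta> \<epsilon> by (simp_all add: e_def)
  have small: "norm s < \<epsilon>" if "\<forall>k. norm (s$k) < e" for s :: "complex^'m"
  proof -
    have "norm s < (\<Sum>k\<in>(UNIV::'m set). e)"
      using norm_vec_le_sum_norm[of s] sum_strict_mono[of UNIV "\<lambda>k. norm (s$k)" "\<lambda>k. e"] that by force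
    also have "\<dots> = real CARD('m) * e" by simp
    also have "\<dots> \<le> real CARD('m) * (\<epsilon> / real CARD('m))"
      by (intro mult_left_mono) (auto simp: e_def)
    also have "\<dots> = \<epsilon>" by simp
    finally show ?thesis .
  qed
  have "\<forall>s. (\<forall>k\<in>K. Re (s$k) < \<delta>) \<and> (\<forall>k. k \<notin> K \<longrightarrow> norm (s$k) < e) \<longrightarrow> h s = 0"
    if "finite K" for K :: "'m set"
    using that
  proof (induction K rule: finite_induct)
    case empty thus ?case using small zero by auto
  next
    case (insert k K)
    show ?case
    proof (intro allI impI)
      fix s :: "complex^'m"
      assume A: "(\<forall>j\<in>insert k K. Re (s$j) < \<delta>) \<and> (\<forall>j. j \<notin> insert k K \<longrightarrow> norm (s$j) < e)"
      have "Re (s$j) < \<delta>" if "j \<noteq> k" for j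
        using A that e(2) complex_Re_le_cmod[of "s$j"] by (cases "j \<in> K") force+
      hence "h (upd s k (s$k)) = 0"
      proof (rule holomorphic_half_plane_vanishes[OF holo e])
        show "h (upd s k z) = 0" if "norm z < e" for z
          using A that insert.hyps(2) insert.IH by (auto simp: upd_nth)
      qed (use A in auto)
      thus "h s = 0" by (simp add: upd_same)
    qed
  qed
  thus ?thesis using s by auto
qed

text \<open>Near a base point \<open>x\<^sub>0\<close> we use the coordinates \<open>x = (e\<^sup>s\<^sup>\<^sub>k x\<^sub>0\<^sub>k)\<^sub>k\<close>; in them each twisted series extends
  to a product of half-planes \<open>Re s\<^sub>k < \<delta>\<close>, and going once around \<open>x\<^sub>k = 0\<close> (\<open>s\<^sub>k \<mapsto> s\<^sub>k + 2\<pi>i\<close>)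
  multiplies it by \<open>e\<^sup>2\<^sup>\<pi>\<^sup>i\<^sup>\<mu>\<^sup>\<^sub>k\<close>.\<close>
locale log_branches_at = log_branches p U L for p U and L :: "'m::finite \<Rightarrow> complex^'m \<Rightarrow> complex" +
  fixes x0 :: "complex^'m"
  assumes x0: "x0 \<in> U"
begin

definition exp_chart :: "complex^'m \<Rightarrow> complex^'m" where
  "exp_chart s = (\<chi> k. exp (s$k) * x0$k)"

definition chart_series :: "('m \<Rightarrow> complex) \<Rightarrow> (('m \<Rightarrow> nat) \<Rightarrow> complex) \<Rightarrow> complex^'m \<Rightarrow> complex" where
  "chart_series \<mu> c s = (\<Prod>k\<in>UNIV. exp (\<mu> k * (L k x0 + s$k))) * mseries c (exp_chart s)"

lemma exp_chart_upd: "exp_chart (upd s k z) = upd (exp_chart s) k (exp z * x0$k)"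
  by (simp add: exp_chart_def upd_def vec_eq_iff)

lemma exp_chart_near_zero:
  obtains \<epsilon> where "\<epsilon> > 0"
    "\<And>s. norm s < \<epsilon> \<Longrightarrow> exp_chart s \<in> U \<and> (\<forall>k. L k (exp_chart s) = L k x0 + s$k)"
proof -
  have "continuous_on UNIV exp_chart" unfolding exp_chart_def by (intro continuous_intros)
  hence "isCont exp_chart 0" by (simp add: continuous_on_eq_continuous_at)
  hence tX: "(exp_chart \<longlongrightarrow> x0) (at 0)" by (simp add: isCont_def exp_chart_def vec_eq_iff)
  have Uev: "eventually (\<lambda>s. exp_chart s \<in> U) (at 0)"
    by (rule topological_tendstoD[OF tX open_U x0])
  have Lev: "eventually (\<lambda>s. L k (exp_chart s) = L k x0 + s$k) (at 0)" for k
  proof -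
    have "isCont (L k) x0" using continuous_L[of k] open_U x0 continuous_on_eq_continuous_at by blast
    hence t1: "((\<lambda>s. L k (exp_chart s)) \<longlongrightarrow> L k x0) (at 0)" by (rule isCont_tendsto_compose[OF _ tX])
    have t2: "((\<lambda>s::complex^'m. s$k) \<longlongrightarrow> 0) (at 0)"
      using tendsto_vec_nth[OF tendsto_ident_at[of "0::complex^'m" UNIV], of k] by simp
    have "((\<lambda>s. L k (exp_chart s) - s$k) \<longlongrightarrow> L k x0 - 0) (at 0)" by (intro tendsto_diff t1 t2)
    hence "eventually (\<lambda>s. dist (L k (exp_chart s) - s$k) (L k x0) < 1) (at 0)"
      by (intro tendstoD) auto
    thus ?thesis using Uev
    proof eventually_elim
      case (elim s)
      have "exp (L k (exp_chart s)) = exp (L k x0 + s$k)"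
        using exp_L[OF elim(2)] exp_L[OF x0] by (simp add: exp_chart_def exp_add mult.commute)
      moreover have "norm (L k (exp_chart s) - (L k x0 + s$k)) < 1"
        using elim(1) by (simp add: dist_norm algebra_simps)
      ultimately show ?case by (rule exp_eq_imp_eq_if_close)
    qed
  qed
  have "eventually (\<lambda>s. \<forall>k. L k (exp_chart s) = L k x0 + s$k) (at 0)"
    by (rule eventually_all_finite) (rule Lev)
  hence "eventually (\<lambda>s. exp_chart s \<in> U \<and> (\<forall>k. L k (exp_chart s) = L k x0 + s$k)) (at 0)"
    using Uev by (rule eventually_conj[rotated])
  moreover have "exp_chart 0 = x0" by (simp add: exp_chart_def vec_eq_iff)
  ultimately have "eventually (\<lambda>s. exp_chart s \<in> U \<and> (\<forall>k. L k (exp_chart s) = L k x0 + s$k)) (nhds 0)"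
    using x0 by (simp add: eventually_nhds_conv_at)
  thus ?thesis using that unfolding eventually_nhds_metric by (auto simp: dist_norm)
qed

lemma exp_chart_half_planes:
  obtains \<delta> where "\<delta> > 0" "\<And>s. (\<forall>k. Re (s$k) < \<delta>) \<Longrightarrow> exp_chart s \<in> domD p"
proof -
  obtain \<delta>' where \<delta>': "\<delta>' > 0" "(\<lambda>k. norms x0 k + \<delta>') \<in> radii_dom p"
    using radii_dom_enlarge[OF in_U_domD[OF x0, unfolded in_domD_iff] p] by blast
  define M where "M = (\<Sum>k\<in>UNIV. norm (x0$k))"
  have M0: "0 \<le> M" unfolding M_def by (simp add: sum_nonneg)
  have Mk: "norm (x0$k) \<le> M" for k unfolding M_def by (rule member_le_sum) auto
  define \<delta> where "\<delta> = ln (1 + \<delta>' / (1 + M))"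
  have exp\<delta>: "exp \<delta> = 1 + \<delta>' / (1 + M)" unfolding \<delta>_def using \<delta>' M0 by (intro exp_ln add_pos_nonneg) auto
  have "\<delta> > 0" unfolding \<delta>_def using \<delta>' M0 by (intro ln_gt_zero) auto
  moreover have "exp_chart s \<in> domD p" if s: "\<forall>k. Re (s$k) < \<delta>" for s :: "complex^'m"
    unfolding in_domD_iff
  proof (rule radii_dom_mono[OF \<delta>'(2)])
    fix k
    show "0 \<le> norms (exp_chart s) k" by (simp add: norms_def)
    have "norms (exp_chart s) k = exp (Re (s$k)) * norm (x0$k)"
      by (simp add: norms_def exp_chart_def norm_mult)
    also have "\<dots> \<le> exp \<delta> * norm (x0$k)" using s[rule_format, of k] by (intro mult_right_mono) auto
    also have "\<dots> = norm (x0$k) + \<delta>' * (norm (x0$k) / (1 + M))" by (simp add: exp\<delta> algebra_simps)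
    also have "\<dots> \<le> norm (x0$k) + \<delta>'"
      using Mk[of k] M0 \<delta>' mult_left_mono[of "norm (x0$k) / (1 + M)" 1 \<delta>'] by (simp add: divide_le_eq)
    finally show "norms (exp_chart s) k \<le> norms x0 k + \<delta>'" by (simp add: norms_def)
  qed
  ultimately show ?thesis by (rule that)
qed

lemma chart_series_holomorphic:
  fixes s :: "complex^'m"
  assumes c: "rapid p c" and \<delta>: "\<And>s. (\<forall>k. Re (s$k) < \<delta>) \<Longrightarrow> exp_chart s \<in> domD p"
    and s: "\<And>j. j \<noteq> k \<Longrightarrow> Re (s$j) < \<delta>"
  shows "(\<lambda>z. chart_series \<mu> c (upd s k z)) holomorphic_on {z. Re z < \<delta>}"
  unfolding chart_series_def
proof (intro holomorphic_on_mult)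
  have "(\<lambda>z. if l = k then z else s$l) holomorphic_on A" for l A
    by (cases "l = k") (auto intro: holomorphic_intros)
  thus "(\<lambda>z. \<Prod>l\<in>UNIV. exp (\<mu> l * (L l x0 + upd s k z $ l))) holomorphic_on {z. Re z < \<delta>}"
    by (auto simp: upd_nth intro!: holomorphic_intros)
  show "(\<lambda>z. mseries c (exp_chart (upd s k z))) holomorphic_on {z. Re z < \<delta>}"
    unfolding holomorphic_on_def
  proof
    fix z0 assume z0: "z0 \<in> {z. Re z < \<delta>}"
    define y where "y = exp_chart (upd s k z0)"
    have yD: "y \<in> domD p" unfolding y_def by (rule \<delta>) (use s z0 in \<open>auto simp: upd_nth\<close>)
    have "(\<lambda>z. exp z * x0$k) field_differentiable at z0"
      by (auto intro!: derivative_eq_intros simp: field_differentiable_def)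
    moreover have "(\<lambda>w. mseries c (upd y k w)) field_differentiable at (exp z0 * x0$k)"
      using mseries_field_differentiable[OF c p yD, of k] by (simp add: y_def exp_chart_def upd_nth)
    ultimately have "((\<lambda>w. mseries c (upd y k w)) \<circ> (\<lambda>z. exp z * x0$k)) field_differentiable at z0"
      by (rule field_differentiable_compose)
    thus "(\<lambda>z. mseries c (exp_chart (upd s k z))) field_differentiable at z0 within {z. Re z < \<delta>}"
      by (simp add: o_def y_def exp_chart_upd upd_upd field_differentiable_at_within)
  qed
qed

lemma chart_series_eq_pow_series:
  "exp_chart s \<in> U \<Longrightarrow> (\<forall>k. L k (exp_chart s) = L k x0 + s$k) \<Longrightarrow>
     pow_series \<mu> c (exp_chart s) = chart_series \<mu> c s"
  by (simp add: pow_series_def branch_pow_def chart_series_def)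

lemma chart_series_monodromy:
  "chart_series \<mu> c (s + (\<chi> k. of_nat (n k) * (2 * pi * \<i>)))
     = (\<Prod>k\<in>UNIV. exp (2 * pi * \<i> * \<mu> k) ^ n k) * chart_series \<mu> c s"
proof -
  have "exp_chart (s + (\<chi> k. of_nat (n k) * (2 * pi * \<i>))) = exp_chart s"
    by (simp add: exp_chart_def vec_eq_iff exp_add exp_of_nat_mult)
  moreover have "exp (\<mu> k * (L k x0 + (s$k + of_nat (n k) * (2 * pi * \<i>))))
      = exp (2 * pi * \<i> * \<mu> k) ^ n k * exp (\<mu> k * (L k x0 + s$k))" for k
  proof -
    have "\<mu> k * (L k x0 + (s$k + of_nat (n k) * (2 * pi * \<i>)))
        = of_nat (n k) * (2 * pi * \<i> * \<mu> k) + \<mu> k * (L k x0 + s$k)"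
      by (simp add: algebra_simps)
    thus ?thesis by (simp add: exp_add exp_of_nat_mult)
  qed
  ultimately show ?thesis by (simp add: chart_series_def prod.distrib mult_ac)
qed

text \<open>Along the ray \<open>s = (ln t, \<dots>, ln t)\<close>, \<open>t \<rightarrow> 0\<^sup>+\<close>, the chart tends to the origin, where the series
  has the value \<open>c 0\<close>.\<close>
lemma chart_series_nonzero:
  assumes c: "rapid p c" "c (\<lambda>_. 0) \<noteq> 0" and \<delta>: "\<delta> > 0"
  obtains s :: "complex^'m" where "\<forall>k. Re (s$k) < \<delta>" "chart_series \<mu> c s \<noteq> 0"
proof -
  have "((\<lambda>t. mseries c (t *\<^sub>R x0)) \<longlongrightarrow> mseries c (0 *\<^sub>R x0)) (at_right 0)"
    using isCont_mseries[OF c(1) p zero_in_domD[OF p]]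
    by (intro isCont_tendsto_compose[where g="mseries c"] tendsto_intros) auto
  hence "eventually (\<lambda>t. mseries c (t *\<^sub>R x0) \<noteq> 0) (at_right 0)"
    using c(2) by (intro tendsto_imp_eventually_ne) (auto simp: mseries_at_zero)
  moreover have "eventually (\<lambda>t::real. 0 < t \<and> t < 1) (at_right 0)"
    by (auto simp: eventually_at_right_field intro!: exI[of _ 1])
  ultimately obtain t where t: "0 < t" "t < 1" "mseries c (t *\<^sub>R x0) \<noteq> 0"
    by (metis (mono_tags, lifting) eventually_conj eventually_happens trivial_limit_at_right_real)
  define s where "s = (\<chi> k::'m. complex_of_real (ln t))"
  have "exp_chart s = t *\<^sub>R x0"
    using t by (simp add: exp_chart_def s_def vec_eq_iff exp_of_real scaleR_conv_of_real[symmetric])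
  moreover have "\<forall>k. Re (s$k) < \<delta>" using \<delta> ln_less_zero[OF t(1,2)] by (simp add: s_def)
  ultimately show ?thesis using that t(3) by (simp add: chart_series_def)
qed

lemma pow_series_linear_independent:
  fixes \<nu> :: "'m \<Rightarrow> nat \<Rightarrow> complex" and c :: "('m \<Rightarrow> nat) \<Rightarrow> ('m \<Rightarrow> nat) \<Rightarrow> complex"
  defines "JS \<equiv> {J. \<forall>k. J k \<in> {1..p}}"
  assumes c: "\<And>J. J \<in> JS \<Longrightarrow> rapid p (c J)" "\<And>J. J \<in> JS \<Longrightarrow> c J (\<lambda>_. 0) = 1"
    and inj: "\<And>k. inj_on (\<lambda>j. exp (2 * pi * \<i> * \<nu> k j)) {1..p}"
    and zero: "\<forall>x\<in>U. (\<Sum>J\<in>JS. w J * pow_series (\<lambda>k. \<nu> k (J k)) (c J) x) = 0"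
    and J0: "J0 \<in> JS"
  shows "w J0 = 0"
proof -
  define h where "h s = (\<Sum>J\<in>JS. w J * chart_series (\<lambda>k. \<nu> k (J k)) (c J) s)" for s
  obtain \<epsilon> where \<epsilon>: "\<epsilon> > 0"
    "\<And>s. norm s < \<epsilon> \<Longrightarrow> exp_chart s \<in> U \<and> (\<forall>k. L k (exp_chart s) = L k x0 + s$k)"
    using exp_chart_near_zero by blast
  obtain \<delta> where \<delta>: "\<delta> > 0" "\<And>s. (\<forall>k. Re (s$k) < \<delta>) \<Longrightarrow> exp_chart s \<in> domD p"
    using exp_chart_half_planes by blast
  have h0: "h s = 0" if "\<forall>k. Re (s$k) < \<delta>" for s :: "complex^'m"
  proof (rule vanishes_on_half_planes[OF \<delta>(1) \<epsilon>(1) _ _ that])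
    show "(\<lambda>z. h (upd s k z)) holomorphic_on {z. Re z < \<delta>}"
      if "\<And>j. j \<noteq> k \<Longrightarrow> Re (s$j) < \<delta>" for s :: "complex^'m" and k
      unfolding h_def using c(1) \<delta>(2) that
      by (intro holomorphic_on_sum holomorphic_on_mult holomorphic_on_const chart_series_holomorphic) auto
    show "h s = 0" if "norm s < \<epsilon>" for s :: "complex^'m"
      using zero \<epsilon>(2)[OF that] by (simp add: h_def chart_series_eq_pow_series[symmetric])
  qed
  have terms0: "w J * chart_series (\<lambda>k. \<nu> k (J k)) (c J) s = 0" if s: "\<forall>k. Re (s$k) < \<delta>" and J: "J \<in> JS" for s :: "complex^'m" and J
  proof (rule power_characters_independent[where \<Lambda>="\<lambda>k j. exp (2 * pi * \<i> * \<nu> k j)", OF inj])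
    fix n :: "'m \<Rightarrow> nat"
    have "h (s + (\<chi> k. of_nat (n k) * (2 * pi * \<i>))) = 0" by (rule h0) (use s in simp)
    thus "(\<Sum>J\<in>{J. \<forall>k. J k \<in> {1..p}}. w J * chart_series (\<lambda>k. \<nu> k (J k)) (c J) s
                            * (\<Prod>k\<in>UNIV. exp (2 * pi * \<i> * \<nu> k (J k)) ^ n k)) = 0"
      unfolding h_def chart_series_monodromy JS_def by (simp add: mult_ac)
  qed (use J in \<open>simp add: JS_def\<close>)
  obtain s :: "complex^'m" where "\<forall>k. Re (s$k) < \<delta>" "chart_series (\<lambda>k. \<nu> k (J0 k)) (c J0) s \<noteq> 0"
    using chart_series_nonzero[OF c(1)[OF J0] _ \<delta>(1)] c(2)[OF J0] by auto
  thus ?thesis using terms0 J0 by auto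
qed

end

section \<open>The non-integrality conditions\<close>

lemma pochhammer_nonzero_if_not_Int: "(z::complex) \<notin> \<int> \<Longrightarrow> pochhammer z t \<noteq> 0"
  by (auto simp: pochhammer_eq_0_iff)

lemma diff_not_Int_commute: "(x::complex) - y \<notin> \<int> \<Longrightarrow> y - x \<notin> \<int>"
  by (metis Ints_minus minus_diff_eq)

lemma eta_not_Int:
  fixes bk :: "nat \<Rightarrow> complex"
  assumes bp: "bk p = 1" and distinct: "\<And>j j'. j \<in> {1..p} \<Longrightarrow> j' \<in> {1..p} \<Longrightarrow> j \<noteq> j' \<Longrightarrow> bk j - bk j' \<notin> \<int>"
    and j0: "j0 \<in> {1..p}" and j: "j \<in> {1..<p}"
  shows "eta p j0 bk j \<notin> \<int>"
proof -
  have bj: "bk j \<notin> \<int>" using distinct[of j p] j bp by auto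
  consider "j0 = p" | "j = j0" "j0 \<noteq> p" | "j \<noteq> j0" "j0 \<noteq> p" by blast
  thus ?thesis
  proof cases
    case 1 thus ?thesis using bj bp j by (simp add: eta_def)
  next
    case 2
    hence "eta p j0 bk j = 2 - bk j" using j by (simp add: eta_def algebra_simps)
    thus ?thesis using bj by (metis Ints_1 Ints_add diff_add_cancel diff_not_Int_commute one_add_one)
  next
    case 3
    hence "eta p j0 bk j = (bk j - bk j0) + 1" using j by (simp add: eta_def algebra_simps)
    thus ?thesis using distinct[of j j0] j j0 3 by (metis Ints_1 Ints_diff add_diff_cancel atLeastLessThan_iff
        atLeastAtMost_iff less_imp_le)
  qed
qed

lemma inj_on_exp_if_diff_not_Int:
  assumes "\<And>j j'. j \<in> A \<Longrightarrow> j' \<in> A \<Longrightarrow> j \<noteq> j' \<Longrightarrow> f j - f j' \<notin> \<int>"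
  shows "inj_on (\<lambda>j. exp (2 * pi * \<i> * f j)) A"
proof (rule inj_onI, rule ccontr)
  fix j j' assume j: "j \<in> A" "j' \<in> A" "j \<noteq> j'" and "exp (2 * pi * \<i> * f j) = exp (2 * pi * \<i> * f j')"
  then obtain n :: int where "2 * pi * \<i> * f j = 2 * pi * \<i> * f j' + of_int (2 * n) * pi * \<i>"
    using exp_eq by blast
  hence "2 * pi * \<i> * (f j - f j') = 2 * pi * \<i> * of_int n" by (simp add: algebra_simps)
  hence "f j - f j' = of_int n" by simp
  thus False using assms[OF j] by simp
qed

theorem mainTheorem4:
  fixes p :: nat and a :: "nat \<Rightarrow> complex" and b :: "nat \<Rightarrow> 'm::finite \<Rightarrow> complex"
    and U :: "(complex^'m) set" and L :: "'m \<Rightarrow> complex^'m \<Rightarrow> complex"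
  assumes p: "p \<ge> 1"
    and bp: "\<forall>k. b p k = 1"
    and C1: "\<forall>i\<in>{1..p}. \<forall>J::'m \<Rightarrow> nat. (\<forall>k. J k \<in> {1..p}) \<longrightarrow>
               a i - (\<Sum>k\<in>UNIV. b (J k) k) \<notin> \<int>"
    and C2: "\<forall>k. \<forall>j j'. 1 \<le> j \<and> j < j' \<and> j' \<le> p \<longrightarrow> b j k - b j' k \<notin> \<int>"
    and U: "open U" "simply_connected U" "U \<noteq> {}"
           "U \<subseteq> domD p \<inter> {x. (\<Prod>k\<in>UNIV. x $ k) \<noteq> 0}"
    and L: "\<forall>k. continuous_on U (L k) \<and> (\<forall>x\<in>U. exp (L k x) = x $ k)"
  shows "(\<forall>J. (\<forall>k. J k \<in> {1..p}) \<longrightarrow>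
            holo_several U (PhiJ p a b L J) \<and> solves_FC p a b U (PhiJ p a b L J))
       \<and> (\<forall>c :: ('m \<Rightarrow> nat) \<Rightarrow> complex.
            (\<forall>x\<in>U. (\<Sum>J\<in>{J. \<forall>k. J k \<in> {1..p}}. c J * PhiJ p a b L J x) = 0)
            \<longrightarrow> (\<forall>J\<in>{J. \<forall>k. J k \<in> {1..p}}. c J = 0))"
proof -
  \<comment> \<open>(C1) and the simple connectivity of \<open>U\<close> are not needed: the branches \<open>L\<close> are given, and
      every series has leading coefficient \<open>1\<close> regardless of \<open>a\<close>.\<close>
  obtain x0 where x0: "x0 \<in> U" using U(3) by blast
  interpret log_branches_at p U L x0
    using p U(1,4) L x0 by unfold_locales auto
  have distinct: "b j k - b j' k \<notin> \<int>" if "j \<in> {1..p}" "j' \<in> {1..p}" "j \<noteq> j'" for k j j'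
    using C2 that diff_not_Int_commute[of "b j' k" "b j k"] by (cases "j < j'") auto
  define c where "c J = FC_coeff p (\<lambda>i. a i + (\<Sum>k\<in>UNIV. 1 - b (J k) k)) (\<lambda>i k. eta p (J k) (\<lambda>j. b j k) i)"
    for J :: "'m \<Rightarrow> nat"
  have nz: "\<And>j k t. j \<in> {1..<p} \<Longrightarrow> pochhammer (eta p (J k) (\<lambda>j. b j k) j) t \<noteq> 0"
    if "\<forall>k. J k \<in> {1..p}" for J :: "'m \<Rightarrow> nat"
    using that bp distinct by (intro pochhammer_nonzero_if_not_Int eta_not_Int) auto
  have Phi: "PhiJ p a b L J = pow_series (\<lambda>k. 1 - b (J k) k) (c J)" for J
    by (simp add: PhiJ_eq_pow_series c_def)
  have c: "rapid p (c J)" "c J (\<lambda>_. 0) = 1" if "\<forall>k. J k \<in> {1..p}" for J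
    using rapid_FC_coeff[OF p nz[OF that]] by (simp_all add: c_def FC_coeff_zero)
  show ?thesis
  proof (intro conjI allI impI ballI)
    show "holo_several U (PhiJ p a b L J)" if "\<forall>k. J k \<in> {1..p}" for J
      unfolding Phi by (rule holo_several_pow_series[OF c(1)[OF that]])
    show "solves_FC p a b U (PhiJ p a b L J)" if "\<forall>k. J k \<in> {1..p}" for J
      by (rule solves_FC_PhiJ[where a=a and b=b and J=J, OF _ _ nz[OF that]]) (use bp that in auto)
    show "w J = 0" if "\<forall>x\<in>U. (\<Sum>J\<in>{J. \<forall>k. J k \<in> {1..p}}. w J * PhiJ p a b L J x) = 0"
      and "J \<in> {J. \<forall>k. J k \<in> {1..p}}" for w J
      using that c distinct
      by (intro pow_series_linear_independent[where \<nu>="\<lambda>k j. 1 - b j k" and c=c] inj_on_exp_if_diff_not_Int)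
         (auto simp: Phi)
  qed
qed

end
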